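(* Let $b\in C^4([0,1])$ be real-valued with $\vartheta/100\le|b'|\le 1/(100\vartheta)$ on $[0,1]$ for some $\vartheta\in(0,1/10)$. There is a constant $C>1$ such that for all $\epsilon\in[-1/4,1/4]\setminus\{0\}$, $k\in\mathbb{Z}\setminus\{0\}$, $y_0\in[0,1]$, integers $1\le m\le5$, and all $f$ with $\|f\|_{Y^{1,m}_{k,y_0,\epsilon}}<\infty$, $$\|T_{k,y_0,\epsilon}f\|_{Z^{1,m}_{k,y_0,\epsilon}}\le C|k|^{-1}[\log\langle k\rangle]^{m+2}\|f\|_{Y^{1,m}_{k,y_0,\epsilon}}.$$
   Context: $\langle k\rangle=\sqrt{1+k^2}$. $\log$ denotes the principal branch of the complex logarithm (its argument $b(y)-b(y_0)+i\epsilon$ is nonzero since $\epsilon\ne0$). For $k\in\mathbb{Z}\setminus\{0\}$, $G_k(y,z)=\frac{1}{k\sinh k}\sinh(k(1-z))\sinh(ky)$ if $y\le z$ and $=\frac{1}{k\sinh k}\sinh(kz)\sinh(k(1-y))$ if $y\ge z$ (Dirichlet Green's function of $k^2-d^2/dy^2$ on $(0,1)$). Define $T_{k,y_0,\epsilon}f(y)=\int_0^1G_k(y,z)\frac{f(z)}{b(z)-b(y_0)+i\epsilon}\,dz$. All norms are over $y\in[0,1]$. For integer $m\ge1$: $\|f\|_{Y^{1,m}_{k,y_0,\epsilon}}=\|f\|_{L^\infty}+\Big\|\frac{f'(y)/|k|}{(\log(b(y)-b(y_0)+i\epsilon)-\vartheta^{-1})^{1+m}}\Big\|_{L^\infty}$;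 $\|f\|_{Z^{1,m}_{k,y_0,\epsilon}}=\|f\|_{L^\infty}+|k|^{-1}\inf\big[\|g\|_{Y^{1,m}_{k,y_0,\epsilon}}+\|h\|_{Y^{1,m+1}_{k,y_0,\epsilon}}\big]$, the infimum over all decompositions $f'(y)=g(y)\log(b(y)-b(y_0)+i\epsilon)+h(y)$. *)

theory Defs
  imports "HOL-Analysis.Analysis"
begin

definition C4_with_bounds :: "(real \<Rightarrow> real) \<Rightarrow> real \<Rightarrow> bool" where
  "C4_with_bounds b \<theta> \<longleftrightarrow>
     (\<exists>d :: nat \<Rightarrow> real \<Rightarrow> real.
        (\<forall>y\<in>{0..1}. d 0 y = b y) \<and>
        (\<forall>j<4. \<forall>y\<in>{0..1}. (d j has_real_derivative d (Suc j) y) (at y within {0..1})) \<and>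
        continuous_on {0..1} (d 4) \<and>
        (\<forall>y\<in>{0..1}. \<theta> / 100 \<le> \<bar>d 1 y\<bar> \<and> \<bar>d 1 y\<bar> \<le> 1 / (100 * \<theta>)))"

definition jbr :: "real \<Rightarrow> real" where
  "jbr k = sqrt (1 + k\<^sup>2)"

text \<open>Dirichlet Green's function of k^2 - d^2/dy^2 on (0,1).\<close>
definition Green :: "int \<Rightarrow> real \<Rightarrow> real \<Rightarrow> real" where
  "Green k y z =
     (if y \<le> z then sinh (real_of_int k * (1 - z)) * sinh (real_of_int k * y)
                   / (real_of_int k * sinh (real_of_int k))
      else sinh (real_of_int k * z) * sinh (real_of_int k * (1 - y))
                   / (real_of_int k * sinh (real_of_int k)))"

definition den :: "(real \<Rightarrow> real) \<Rightarrow> real \<Rightarrow> real \<Rightarrow> real \<Rightarrow> complex" where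
  "den b y0 eps y = complex_of_real (b y - b y0) + \<i> * complex_of_real eps"

definition Top :: "(real \<Rightarrow> real) \<Rightarrow> int \<Rightarrow> real \<Rightarrow> real \<Rightarrow> (real \<Rightarrow> complex) \<Rightarrow> real \<Rightarrow> complex" where
  "Top b k y0 eps f y =
     integral {0..1} (\<lambda>z. complex_of_real (Green k y z) * f z / den b y0 eps z)"

definition dI :: "(real \<Rightarrow> complex) \<Rightarrow> real \<Rightarrow> complex" where
  "dI f y = vector_derivative f (at y within {0..1})"

definition diffI :: "(real \<Rightarrow> complex) \<Rightarrow> bool" where
  "diffI f \<longleftrightarrow> (\<forall>y\<in>{0..1}. f differentiable (at y within {0..1}))"

definition supnorm :: "(real \<Rightarrow> complex) \<Rightarrow> ereal" where
  "supnorm f = (SUP y\<in>{0..1}. ereal (cmod (f y)))"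

definition Ynorm :: "(real \<Rightarrow> real) \<Rightarrow> real \<Rightarrow> int \<Rightarrow> real \<Rightarrow> real \<Rightarrow> nat \<Rightarrow> (real \<Rightarrow> complex) \<Rightarrow> ereal" where
  "Ynorm b \<theta> k y0 eps m f =
     (if diffI f then
        supnorm f +
        supnorm (\<lambda>y. (dI f y / complex_of_real \<bar>real_of_int k\<bar>)
                      / (Ln (den b y0 eps y) - complex_of_real (1 / \<theta>)) ^ (1 + m))
      else \<infinity>)"

definition Znorm :: "(real \<Rightarrow> real) \<Rightarrow> real \<Rightarrow> int \<Rightarrow> real \<Rightarrow> real \<Rightarrow> nat \<Rightarrow> (real \<Rightarrow> complex) \<Rightarrow> ereal" where
  "Znorm b \<theta> k y0 eps m f =
     (if diffI f then
        supnorm f +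
        ereal (1 / \<bar>real_of_int k\<bar>) *
          (INF gh \<in> {(g, h). \<forall>y\<in>{0..1}. dI f y = g y * Ln (den b y0 eps y) + h y}.
              Ynorm b \<theta> k y0 eps m (fst gh) + Ynorm b \<theta> k y0 eps (m + 1) (snd gh))
      else \<infinity>)"

end

theory Submission
  imports Defs
begin

text \<open>
  Write \<open>u = T f\<close> and \<open>D = b - b y0 + i eps\<close>. Splitting the Green's function at \<open>z = y\<close>,
  \<open>u\<close> and \<open>u'\<close> are combinations of \<open>sinh (k y)\<close>, \<open>cosh (k y)\<close>, ... with the integrals
  \<open>P y = \<integral>\<^sub>y\<^sup>1 sinh (k (1 - z)) f / D\<close> and \<open>Q y = \<integral>\<^sub>0\<^sup>y sinh (k z) f / D\<close>, divided by \<open>k sinh k\<close>.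
  Since \<open>f / D = r (log D)'\<close> with \<open>r = f / b'\<close>, an integration by parts in \<open>P\<close> and \<open>Q\<close> puts the
  derivative on \<open>sinh (k z) r\<close>; the boundary terms add up to \<open>- r log D\<close>. This gives the
  decomposition \<open>u' = g log D + h\<close> with \<open>g = - r\<close>, where \<open>h\<close>, \<open>h'\<close> and \<open>u\<close> are integrals of
  \<open>|k| |log D - 1/\<theta>|\<^sup>m\<^sup>+\<^sup>2\<close> (up to constants) against kernels of size \<open>exp (- |k| |y - z|)\<close>.
  Finally \<open>|log D - 1/\<theta>| \<le> c (1 + |ln (|z - y0| + |eps|)|)\<close>, and splitting at
  \<open>|z - y0| + |eps| = 1/|k|\<close> shows that the \<open>exp (- |k| |y - z|)\<close>-average of its \<open>p\<close>-th power is
  \<open>O ((log |k|)\<^sup>p / |k|)\<close>.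
\<close>

section \<open>Logarithmic weights against exponential kernels\<close>

lemma one_plus_power_le_exp_half:
  fixes v :: real and p :: nat
  assumes "0 \<le> v" "1 \<le> p"
  shows "(1 + v) ^ p \<le> (2 * real p) ^ p * exp (v / 2)"
proof -
  have "1 + v / (2 * p) \<le> exp (v / (2 * p))" by (rule exp_ge_add_one_self)
  hence "1 + v \<le> 2 * real p * exp (v / (2 * p))"
    using assms by (simp add: field_simps)
  hence "(1 + v) ^ p \<le> (2 * real p * exp (v / (2 * p))) ^ p"
    using assms by (intro power_mono) auto
  also have "\<dots> = (2 * real p) ^ p * exp (v / 2)"
    using assms by (simp add: power_mult_distrib exp_of_nat_mult[symmetric])
  finally show ?thesis .
qed

lemma one_minus_ln_power_le:
  fixes x :: real and p :: nat
  assumes x: "0 < x" "x \<le> 1" and p: "1 \<le> p"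
  shows "(1 - ln x) ^ p \<le> (2 * real p) ^ p / sqrt x"
proof -
  have "sqrt x = exp (ln x / 2)" using x by (simp add: powr_half_sqrt[symmetric] powr_def)
  then have "exp (- ln x / 2) = 1 / sqrt x" by (simp add: exp_minus field_simps)
  then show ?thesis using one_plus_power_le_exp_half[of "- ln x" p] x p by simp
qed

text \<open>The derivative of \<open>s \<mapsto> 2 / K * arctan (sqrt (K * s))\<close>: its integral over \<open>s > 0\<close> is
  at most \<open>pi / K\<close>, yet it dominates \<open>1 / (2 * sqrt (K * s))\<close> for \<open>K * s \<le> 1\<close>.\<close>
definition arctan_kernel :: "real \<Rightarrow> real \<Rightarrow> real" where
  "arctan_kernel K s = 1 / (sqrt (K * s) * (1 + K * s))"

lemma has_real_derivative_arctan_sqrt: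
  fixes K s :: real
  assumes K: "0 < K" and s: "0 < s"
  shows "((\<lambda>s. 2 / K * arctan (sqrt (K * s))) has_real_derivative arctan_kernel K s) (at s)"
proof -
  have Ks: "0 < K * s" using K s by simp
  have "((\<lambda>s. 2 / K * arctan (sqrt (K * s))) has_real_derivative
      2 / K * (inverse (1 + (sqrt (K * s))\<^sup>2) * (inverse (sqrt (K * s)) / 2 * K))) (at s)"
    using Ks by (auto intro!: derivative_eq_intros)
  moreover have "2 / K * (inverse (1 + (sqrt (K * s))\<^sup>2) * (inverse (sqrt (K * s)) / 2 * K))
      = arctan_kernel K s"
    using K Ks by (simp add: arctan_kernel_def divide_simps)
  ultimately show ?thesis by simp
qed

text \<open>For \<open>K * t \<ge> 1\<close> simply \<open>\<bar>ln t\<bar> \<le> 1 + ln K\<close>; for \<open>K * t < 1\<close> the excess \<open>ln (1 / (K * t))\<close>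
  is absorbed by \<open>1 / sqrt (K * t)\<close>.\<close>
lemma one_plus_abs_ln_power_le:
  fixes K t :: real and p :: nat
  assumes K: "1 \<le> K" and t: "0 < t" "t \<le> 2" and p: "1 \<le> p"
  shows "(1 + \<bar>ln t\<bar>) ^ p \<le> (1 + ln K) ^ p * (2 ^ p + 2 * (2 * real p) ^ p * arctan_kernel K t)"
proof -
  have lnK: "0 \<le> ln K" using K by simp
  have kernel_nn: "0 \<le> arctan_kernel K t" using K t by (simp add: arctan_kernel_def)
  show ?thesis
  proof (cases "K * t \<ge> 1")
    case True
    have "ln t + ln K = ln (K * t)" using K t by (simp add: ln_mult)
    moreover have "0 \<le> ln (K * t)" using True by simp
    ultimately have "- ln K \<le> ln t" by linarith
    moreover have "ln t \<le> 1" using ln_le_minus_one[OF t(1)] t by simp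
    ultimately have "1 + \<bar>ln t\<bar> \<le> 2 * (1 + ln K)" using lnK by (simp add: abs_le_iff)
    hence "(1 + \<bar>ln t\<bar>) ^ p \<le> 2 ^ p * (1 + ln K) ^ p"
      by (metis power_mono power_mult_distrib abs_ge_zero add_nonneg_nonneg zero_le_one)
    also have "\<dots> \<le> (1 + ln K) ^ p * (2 ^ p + 2 * (2 * real p) ^ p * arctan_kernel K t)"
      using lnK kernel_nn by (simp add: mult.commute)
    finally show ?thesis .
  next
    case False
    define x where "x = K * t"
    have x: "0 < x" "x < 1" using False K t by (auto simp: x_def)
    have "ln t = ln x - ln K" using K t by (simp add: x_def ln_mult)
    moreover have lnx: "ln x < 0" using x by simp
    ultimately have "1 + \<bar>ln t\<bar> = 1 + ln K - ln x" using lnK by simp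
    also have "\<dots> \<le> (1 + ln K) * (1 - ln x)"
      using mult_nonneg_nonpos[OF lnK less_imp_le[OF lnx]] by (simp add: algebra_simps)
    finally have "(1 + \<bar>ln t\<bar>) ^ p \<le> (1 + ln K) ^ p * (1 - ln x) ^ p"
      by (metis power_mono power_mult_distrib abs_ge_zero add_nonneg_nonneg zero_le_one)
    also have "\<dots> \<le> (1 + ln K) ^ p * ((2 * real p) ^ p / sqrt x)"
      using one_minus_ln_power_le[of x p] x p lnK by (intro mult_left_mono) auto
    also have "\<dots> \<le> (1 + ln K) ^ p * (2 ^ p + 2 * (2 * real p) ^ p * arctan_kernel K t)"
    proof (rule mult_left_mono)
      have half: "1 / sqrt x \<le> 2 * arctan_kernel K t"
        using x by (simp add: arctan_kernel_def x_def[symmetric] divide_simps)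
      hence "(2 * real p) ^ p / sqrt x \<le> 2 * (2 * real p) ^ p * arctan_kernel K t"
        using mult_left_mono[OF half, of "(2 * real p) ^ p"] by (simp add: mult_ac)
      thus "(2 * real p) ^ p / sqrt x \<le> 2 ^ p + 2 * (2 * real p) ^ p * arctan_kernel K t"
        using zero_le_power[of "2::real" p] by linarith
    qed (use lnK in simp)
    finally show ?thesis .
  qed
qed

lemma continuous_on_arctan_kernel:
  fixes K e y0 :: real
  assumes "0 < K" "0 < e"
  shows "continuous_on S (\<lambda>z. arctan_kernel K (\<bar>z - y0\<bar> + e))"
proof -
  have pos: "0 < K * (\<bar>z - y0\<bar> + e)" for z using assms by (simp add: add_nonneg_pos)
  then have "\<bar>z - y0\<bar> + e \<noteq> 0" "1 + K * (\<bar>z - y0\<bar> + e) \<noteq> 0" for z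
    by (metis mult_zero_right order_less_irrefl, smt (verit) pos)
  then show ?thesis
    unfolding arctan_kernel_def by (intro continuous_intros) (use pos in auto)
qed

lemma arctan_sqrt_diff_le:
  fixes K e s :: real
  assumes K: "0 < K" and e: "0 < e"
  shows "2 / K * arctan (sqrt (K * s)) - 2 / K * arctan (sqrt (K * e)) \<le> pi / K"
proof -
  have "0 \<le> arctan (sqrt (K * e))" using K e by simp
  then have "arctan (sqrt (K * s)) - arctan (sqrt (K * e)) \<le> pi / 2"
    using arctan_ubound[of "sqrt (K * s)"] by linarith
  then have "2 / K * (arctan (sqrt (K * s)) - arctan (sqrt (K * e))) \<le> 2 / K * (pi / 2)"
    using K by (intro mult_left_mono) auto
  then show ?thesis by (simp add: right_diff_distrib)
qed

lemma arctan_kernel_integral_le: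
  fixes K e y0 :: real
  assumes K: "0 < K" and e: "0 < e" and y0: "0 \<le> y0" "y0 \<le> 1"
  shows "integral {0..1} (\<lambda>z. arctan_kernel K (\<bar>z - y0\<bar> + e)) \<le> 2 * pi / K"
proof -
  let ?f = "\<lambda>z. arctan_kernel K (\<bar>z - y0\<bar> + e)"
  let ?G = "\<lambda>s. 2 / K * arctan (sqrt (K * s))"
  have G_le: "?G s - ?G e \<le> pi / K" for s
    by (rule arctan_sqrt_diff_le[OF K e])
  have "(?f has_integral ?G (1 - y0 + e) - ?G (y0 - y0 + e)) {y0..1}"
  proof (rule fundamental_theorem_of_calculus[OF y0(2)])
    fix z assume z: "z \<in> {y0..1}"
    have "((\<lambda>z. ?G (z - y0 + e)) has_real_derivative arctan_kernel K (z - y0 + e) * 1) (at z)"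
      by (rule DERIV_chain2[OF has_real_derivative_arctan_sqrt[OF K]])
        (use z e in \<open>auto intro!: derivative_eq_intros\<close>)
    then show "((\<lambda>z. ?G (z - y0 + e)) has_vector_derivative ?f z) (at z within {y0..1})"
      using z by (simp add: has_real_derivative_iff_has_vector_derivative has_vector_derivative_at_within)
  qed
  then have right: "integral {y0..1} ?f \<le> pi / K"
    using G_le by (simp add: integral_unique)
  have "(?f has_integral - ?G (y0 - y0 + e) - - ?G (y0 - 0 + e)) {0..y0}"
  proof (rule fundamental_theorem_of_calculus[OF y0(1)])
    fix z assume z: "z \<in> {0..y0}"
    have "((\<lambda>z. - ?G (y0 - z + e)) has_real_derivative - (arctan_kernel K (y0 - z + e) * (- 1))) (at z)"
      by (intro DERIV_minus DERIV_chain2[OF has_real_derivative_arctan_sqrt[OF K]])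
        (use z e in \<open>auto intro!: derivative_eq_intros\<close>)
    moreover have "\<bar>z - y0\<bar> = y0 - z" using z by simp
    ultimately show "((\<lambda>z. - ?G (y0 - z + e)) has_vector_derivative ?f z) (at z within {0..y0})"
      by (simp add: has_real_derivative_iff_has_vector_derivative has_vector_derivative_at_within)
  qed
  then have left: "integral {0..y0} ?f \<le> pi / K"
    using G_le[of "y0 + e"] by (simp add: integral_unique)
  have "?f integrable_on {0..1}"
    by (rule integrable_continuous_interval[OF continuous_on_arctan_kernel[OF K e]])
  then have "integral {0..1} ?f = integral {0..y0} ?f + integral {y0..1} ?f"
    using y0 by (simp add: Henstock_Kurzweil_Integration.integral_combine)
  with left right show ?thesis by simp
qed

lemma exp_decay_has_integral_right:
  fixes K y :: real
  assumes K: "0 < K" and y: "y \<le> 1"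
  shows "((\<lambda>z. exp (- K * (z - y))) has_integral (1 - exp (- K * (1 - y))) / K) {y..1}"
proof -
  have "((\<lambda>z. - exp (- K * (z - y)) / K) has_vector_derivative exp (- K * (z - y))) (at z within {y..1})"
    for z using K
    by (auto intro!: derivative_eq_intros simp: has_real_derivative_iff_has_vector_derivative[symmetric])
  from fundamental_theorem_of_calculus[OF y this] show ?thesis by (simp add: diff_divide_distrib)
qed

lemma exp_decay_has_integral_left:
  fixes K y :: real
  assumes K: "0 < K" and y: "0 \<le> y"
  shows "((\<lambda>z. exp (- K * (y - z))) has_integral (1 - exp (- K * y)) / K) {0..y}"
proof -
  have "((\<lambda>z. exp (- K * (y - z)) / K) has_vector_derivative exp (- K * (y - z))) (at z within {0..y})"
    for z using K
    by (auto intro!: derivative_eq_intros simp: has_real_derivative_iff_has_vector_derivative[symmetric])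
  from fundamental_theorem_of_calculus[OF y this] show ?thesis by (simp add: diff_divide_distrib)
qed

lemma integral_mult_weight_le:
  fixes w N \<psi> :: "real \<Rightarrow> real"
  assumes w: "(w has_integral W) {a..b}" "continuous_on {a..b} w"
      "\<And>z. z \<in> {a..b} \<Longrightarrow> 0 \<le> w z \<and> w z \<le> 1"
    and N: "continuous_on {a..b} N" "\<And>z. z \<in> {a..b} \<Longrightarrow> N z \<le> B * (c0 + c * \<psi> z)"
    and \<psi>: "continuous_on {a..b} \<psi>" "\<And>z. z \<in> {a..b} \<Longrightarrow> 0 \<le> \<psi> z"
    and B: "0 \<le> B" and c: "0 \<le> c"
  shows "integral {a..b} (\<lambda>z. w z * N z) \<le> B * (c0 * W + c * integral {a..b} \<psi>)"
proof (rule has_integral_le)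
  show "((\<lambda>z. w z * N z) has_integral integral {a..b} (\<lambda>z. w z * N z)) {a..b}"
    by (intro integrable_integral integrable_continuous_interval continuous_intros w N)
  show "((\<lambda>z. B * (c0 * w z + c * \<psi> z)) has_integral B * (c0 * W + c * integral {a..b} \<psi>)) {a..b}"
    by (intro has_integral_mult_right has_integral_add w integrable_integral
        integrable_continuous_interval \<psi>)
next
  fix z assume z: "z \<in> {a..b}"
  then have "w z * N z \<le> w z * (B * (c0 + c * \<psi> z))"
    using w(3) N(2) by (intro mult_left_mono) auto
  also have "\<dots> = B * (c0 * w z + w z * (c * \<psi> z))" by (simp add: algebra_simps)
  also have "\<dots> \<le> B * (c0 * w z + c * \<psi> z)"
    using w(3)[OF z] B c \<psi>(2)[OF z] mult_left_le_one_le[of "c * \<psi> z" "w z"]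
    by (intro mult_left_mono add_left_mono) auto
  finally show "w z * N z \<le> B * (c0 * w z + c * \<psi> z)" .
qed

lemma exp_kernel_log_power_integral_le:
  fixes K e y y0 A :: real and p :: nat and N :: "real \<Rightarrow> real"
  assumes K: "1 \<le> K" and e: "0 < e" "e \<le> 1/2" and y: "0 \<le> y" "y \<le> 1"
    and y0: "0 \<le> y0" "y0 \<le> 1" and p: "1 \<le> p" and A: "0 \<le> A"
    and N: "continuous_on {0..1} N"
    and N_le: "\<And>z. z \<in> {0..1} \<Longrightarrow> N z \<le> A * (1 + \<bar>ln (\<bar>z - y0\<bar> + e)\<bar>) ^ p"
  shows "K * (integral {y..1} (\<lambda>z. exp (- K * (z - y)) * N z)
              + integral {0..y} (\<lambda>z. exp (- K * (y - z)) * N z))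
     \<le> A * (1 + ln K) ^ p * (2 ^ (p + 1) + 4 * pi * (2 * real p) ^ p)"
proof -
  define B where "B = A * (1 + ln K) ^ p"
  define c where "c = 2 * (2 * real p) ^ p"
  define \<psi> where "\<psi> = (\<lambda>z. arctan_kernel K (\<bar>z - y0\<bar> + e))"
  have K0: "0 < K" using K by simp
  have B: "0 \<le> B" using K A by (simp add: B_def)
  have c: "0 \<le> c" by (simp add: c_def)
  have \<psi>: "0 \<le> \<psi> z" for z using K0 e by (simp add: \<psi>_def arctan_kernel_def)
  have \<psi>_cont: "continuous_on S \<psi>" for S unfolding \<psi>_def by (rule continuous_on_arctan_kernel[OF K0 e(1)])
  have N_le': "N z \<le> B * (2 ^ p + c * \<psi> z)" if "z \<in> {0..1}" for z
  proof -
    have "0 < \<bar>z - y0\<bar> + e" "\<bar>z - y0\<bar> + e \<le> 2" using that y0 e by auto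
    from one_plus_abs_ln_power_le[OF K this p] N_le[OF that] A show ?thesis
      unfolding B_def c_def \<psi>_def by (smt (verit) mult.assoc mult_left_mono)
  qed
  have side: "integral {a..b} (\<lambda>z. w z * N z) \<le> B * (2 ^ p * W + c * integral {a..b} \<psi>)"
    if "(w has_integral W) {a..b}" "continuous_on {a..b} w" "\<And>z. z \<in> {a..b} \<Longrightarrow> 0 \<le> w z \<and> w z \<le> 1"
      and ab: "{a..b} \<subseteq> {0..1}" for w W a b
    using that ab B c \<psi> N_le'
    by (intro integral_mult_weight_le continuous_on_subset[OF N] \<psi>_cont) auto
  have right: "integral {y..1} (\<lambda>z. exp (- K * (z - y)) * N z)
      \<le> B * (2 ^ p * ((1 - exp (- K * (1 - y))) / K) + c * integral {y..1} \<psi>)"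
    using y K0 by (intro side exp_decay_has_integral_right continuous_intros) auto
  have left: "integral {0..y} (\<lambda>z. exp (- K * (y - z)) * N z)
      \<le> B * (2 ^ p * ((1 - exp (- K * y)) / K) + c * integral {0..y} \<psi>)"
    using y K0 by (intro side exp_decay_has_integral_left continuous_intros) auto
  have "integral {0..y} \<psi> + integral {y..1} \<psi> = integral {0..1} \<psi>"
    using y by (intro Henstock_Kurzweil_Integration.integral_combine integrable_continuous_interval \<psi>_cont)
  moreover have "K * integral {0..1} \<psi> \<le> 2 * pi"
    using arctan_kernel_integral_le[OF K0 e(1) y0] K0 by (simp add: \<psi>_def field_simps)
  ultimately have \<psi>_total: "K * integral {y..1} \<psi> + K * integral {0..y} \<psi> \<le> 2 * pi"
    by (metis add.commute distrib_left)
  have "K * (integral {y..1} (\<lambda>z. exp (- K * (z - y)) * N z)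
              + integral {0..y} (\<lambda>z. exp (- K * (y - z)) * N z))
      \<le> K * (B * (2 ^ p * ((1 - exp (- K * (1 - y))) / K) + c * integral {y..1} \<psi>)
             + B * (2 ^ p * ((1 - exp (- K * y)) / K) + c * integral {0..y} \<psi>))"
    using right left K0 by (intro mult_left_mono add_mono) auto
  also have "\<dots> = B * (2 ^ p * ((1 - exp (- K * (1 - y))) + (1 - exp (- K * y)))
      + c * (K * integral {y..1} \<psi> + K * integral {0..y} \<psi>))"
    using K0 by (simp add: field_simps)
  also have "\<dots> \<le> B * (2 ^ p * 2 + c * (2 * pi))"
    using B c \<psi>_total
    by (intro mult_left_mono add_mono) (auto simp: order_trans[OF _ exp_ge_zero])
  finally show ?thesis by (simp add: B_def c_def algebra_simps)
qed


lemma abs_sinh_le_cosh: "\<bar>sinh (x::real)\<bar> \<le> cosh x"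
proof -
  have "\<bar>sinh x\<bar>\<^sup>2 \<le> (cosh x)\<^sup>2" using cosh_square_eq[of x] by simp
  then show ?thesis by (rule power2_le_imp_le) (simp add: less_imp_le)
qed

lemma cosh_le_exp_abs: "cosh (x::real) \<le> exp \<bar>x\<bar>"
proof -
  have "exp x \<le> exp \<bar>x\<bar>" "exp (- x) \<le> exp \<bar>x\<bar>" by simp_all
  moreover have "2 * cosh x = exp x + exp (- x)" by (simp add: cosh_def)
  ultimately show ?thesis by linarith
qed

lemma exp_le_4_sinh:
  assumes "1 \<le> (x::real)"
  shows "exp x \<le> 4 * sinh x"
proof -
  have "exp (- x) \<le> 1" "1 + x \<le> exp x" using assms exp_ge_add_one_self[of x] by auto
  moreover have "2 * sinh x = exp x - exp (- x)" by (simp add: sinh_def)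
  ultimately show ?thesis using assms by linarith
qed

lemma power_le_power_of_le_one:
  fixes x l :: real and p :: nat
  assumes l: "0 < l" "l \<le> 1" and x: "l \<le> x" and p: "p \<le> q"
  shows "l ^ q \<le> x ^ p"
proof (cases "1 \<le> x")
  case True
  then show ?thesis using l by (simp add: power_le_one order_trans[of _ 1])
next
  case False
  have "l ^ q \<le> x ^ q" using l x by (intro power_mono) auto
  also have "\<dots> \<le> x ^ p" using False l x p by (intro power_decreasing) auto
  finally show ?thesis .
qed

lemma divide_divide_le_iff:
  fixes a x c d :: real
  shows "0 < a \<Longrightarrow> 0 < x \<Longrightarrow> c / a / x \<le> d \<longleftrightarrow> c \<le> a * x * d"
  by (simp add: pos_divide_le_eq mult_ac)

lemma continuous_on_of_has_vector_derivative:
  fixes g :: "real \<Rightarrow> 'a::real_normed_vector"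
  assumes "\<And>y. y \<in> {0..1} \<Longrightarrow> (g has_vector_derivative g' y) (at y within {0..1})"
  shows "continuous_on {0..1} g"
  using assms has_vector_derivative_continuous continuous_on_eq_continuous_within by blast

lemma dI_eq:
  assumes "y \<in> {0..1}" and "(g has_vector_derivative g') (at y within {0..1})"
  shows "dI g y = g'"
  using vector_derivative_within_cbox[of 0 1 y g g'] assms by (simp add: dI_def)

lemma diffI_of_has_vector_derivative:
  "(\<And>y. y \<in> {0..1} \<Longrightarrow> (g has_vector_derivative g' y) (at y within {0..1})) \<Longrightarrow> diffI g"
  unfolding diffI_def using differentiableI_vector by blast

lemma supnorm_nonneg: "0 \<le> supnorm \<phi>"
  unfolding supnorm_def by (rule SUP_upper2[of 0]) auto

lemma norm_le_supnorm: "y \<in> {0..1} \<Longrightarrow> ereal (cmod (\<phi> y)) \<le> supnorm \<phi>"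
  unfolding supnorm_def by (rule SUP_upper)

lemma supnorm_le: "(\<And>y. y \<in> {0..1} \<Longrightarrow> cmod (\<phi> y) \<le> B) \<Longrightarrow> supnorm \<phi> \<le> ereal B"
  unfolding supnorm_def by (rule SUP_least) simp

lemma supnorm_finite:
  assumes "supnorm \<phi> < \<infinity>"
  shows "supnorm \<phi> = ereal (real_of_ereal (supnorm \<phi>))"
    and "y \<in> {0..1} \<Longrightarrow> cmod (\<phi> y) \<le> real_of_ereal (supnorm \<phi>)"
proof -
  obtain r where r: "supnorm \<phi> = ereal r"
    using assms supnorm_nonneg[of \<phi>] by (cases "supnorm \<phi>") auto
  then show "supnorm \<phi> = ereal (real_of_ereal (supnorm \<phi>))" by simp
  show "cmod (\<phi> y) \<le> real_of_ereal (supnorm \<phi>)" if "y \<in> {0..1}"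
    using norm_le_supnorm[OF that, of \<phi>] r by simp
qed

lemma real_supnorm_nonneg: "0 \<le> real_of_ereal (supnorm \<phi>)"
  using supnorm_nonneg[of \<phi>] by (simp add: real_of_ereal_pos)

section \<open>The denominator and its logarithm\<close>

lemma C4_with_bounds_E:
  assumes "C4_with_bounds b \<theta>"
  obtains b' b'' :: "real \<Rightarrow> real" and B :: real
  where "\<And>y. y \<in> {0..1} \<Longrightarrow> (b has_real_derivative b' y) (at y within {0..1})"
    and "\<And>y. y \<in> {0..1} \<Longrightarrow> (b' has_real_derivative b'' y) (at y within {0..1})"
    and "\<And>y. y \<in> {0..1} \<Longrightarrow> \<theta> / 100 \<le> \<bar>b' y\<bar> \<and> \<bar>b' y\<bar> \<le> 1 / (100 * \<theta>)"
    and "\<And>y. y \<in> {0..1} \<Longrightarrow> \<bar>b'' y\<bar> \<le> B"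
proof -
  from assms obtain d :: "nat \<Rightarrow> real \<Rightarrow> real" where
    d0: "\<forall>y\<in>{0..1}. d 0 y = b y" and
    d: "\<forall>j<4. \<forall>y\<in>{0..1}. (d j has_real_derivative d (Suc j) y) (at y within {0..1})" and
    d1: "\<forall>y\<in>{0..1}. \<theta> / 100 \<le> \<bar>d 1 y\<bar> \<and> \<bar>d 1 y\<bar> \<le> 1 / (100 * \<theta>)"
    unfolding C4_with_bounds_def by blast
  have b': "(b has_real_derivative d 1 y) (at y within {0..1})" if y: "y \<in> {0..1}" for y
  proof -
    have "(d 0 has_real_derivative d 1 y) (at y within {0..1})" using d y by auto
    then show ?thesis
      by (rule has_field_derivative_transform_within[OF _ zero_less_one y]) (use d0 in auto)
  qed
  have b'': "(d 1 has_real_derivative d 2 y) (at y within {0..1})" if "y \<in> {0..1}" for y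
    using d that by (auto simp: numeral_2_eq_2)
  have "(d 2 has_real_derivative d 3 y) (at y within {0..1})" if "y \<in> {0..1}" for y
    using d that by (auto simp: numeral_3_eq_3 numeral_2_eq_2)
  then have "continuous_on {0..1} (d 2)"
    using DERIV_continuous continuous_on_eq_continuous_within by blast
  then have "bounded (d 2 ` {0..1})" by (intro compact_imp_bounded compact_continuous_image) auto
  then obtain B where "\<forall>y\<in>{0..1}. \<bar>d 2 y\<bar> \<le> B" unfolding bounded_iff by auto
  with b' b'' d1 that[of "d 1" "d 2" B] show ?thesis by blast
qed

definition log_const :: "real \<Rightarrow> real" where
  "log_const \<theta> = ln (1 / (100 * \<theta>) + 1) + \<bar>ln (\<theta> / 200)\<bar> + pi + 1 / \<theta>"

lemma one_le_log_const:
  assumes "0 < \<theta>" "\<theta> < 1/10"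
  shows "1 \<le> log_const \<theta>"
proof -
  have "0 \<le> ln (1 / (100 * \<theta>) + 1)" using assms by simp
  moreover have "1 \<le> 1 / \<theta>" using assms by (simp add: divide_simps)
  ultimately show ?thesis unfolding log_const_def using pi_gt3 by linarith
qed

locale den_setting =
  fixes b b' b'' :: "real \<Rightarrow> real" and \<theta> B :: real and eps :: real and k :: int and y0 :: real
  assumes \<theta>: "0 < \<theta>" "\<theta> < 1/10"
    and b': "\<And>y. y \<in> {0..1} \<Longrightarrow> (b has_real_derivative b' y) (at y within {0..1})"
    and b'': "\<And>y. y \<in> {0..1} \<Longrightarrow> (b' has_real_derivative b'' y) (at y within {0..1})"
    and b'_bounds: "\<And>y. y \<in> {0..1} \<Longrightarrow> \<theta> / 100 \<le> \<bar>b' y\<bar> \<and> \<bar>b' y\<bar> \<le> 1 / (100 * \<theta>)"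
    and b''_bound: "\<And>y. y \<in> {0..1} \<Longrightarrow> \<bar>b'' y\<bar> \<le> B"
    and eps: "eps \<in> {-1/4..1/4}" "eps \<noteq> 0" and k: "k \<noteq> 0" and y0: "y0 \<in> {0..1}"
begin

abbreviation "D \<equiv> den b y0 eps"
abbreviation "logD \<equiv> \<lambda>z. Ln (D z)"
abbreviation "Lw \<equiv> \<lambda>z. Ln (D z) - complex_of_real (1 / \<theta>)"

lemma b'_nonzero: "y \<in> {0..1} \<Longrightarrow> b' y \<noteq> 0"
  using b'_bounds[of y] \<theta> by force

lemma B_nonneg: "0 \<le> B"
  using b''_bound[of 0] by simp

lemma abs_b_diff_bounds:
  assumes y: "y \<in> {0..1}"
  shows "\<theta> / 100 * \<bar>y - y0\<bar> \<le> \<bar>b y - b y0\<bar>" "\<bar>b y - b y0\<bar> \<le> 1 / (100 * \<theta>) * \<bar>y - y0\<bar>"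
proof -
  have mvt: "\<exists>x\<in>{0..1}. b v - b u = (v - u) * b' x" if "u \<in> {0..1}" "v \<in> {0..1}" "u \<le> v" for u v
  proof -
    have "\<exists>x\<in>{u..v}. b v - b u = b' x * (v - u)"
    proof (rule mvt_very_simple[OF \<open>u \<le> v\<close>])
      fix x assume "u \<le> x" "x \<le> v"
      with that have "x \<in> {0..1}" "{u..v} \<subseteq> {0..1}" by auto
      then show "(b has_derivative (\<lambda>h. b' x * h)) (at x within {u..v})"
        using DERIV_subset[OF b'] by (simp add: has_field_derivative_def)
    qed
    with that show ?thesis by (auto simp: mult.commute)
  qed
  obtain x where x: "x \<in> {0..1}" "\<bar>b y - b y0\<bar> = \<bar>y - y0\<bar> * \<bar>b' x\<bar>"
  proof (cases "y0 \<le> y")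
    case True
    with mvt[OF y0 y] that show ?thesis by (auto simp: abs_mult)
  next
    case False
    then obtain x where "x \<in> {0..1}" "b y0 - b y = (y0 - y) * b' x" using mvt[OF y y0] by auto
    with that show ?thesis by (metis abs_minus_commute abs_mult)
  qed
  have "\<theta> / 100 * \<bar>y - y0\<bar> \<le> \<bar>b' x\<bar> * \<bar>y - y0\<bar>" "\<bar>b' x\<bar> * \<bar>y - y0\<bar> \<le> 1 / (100 * \<theta>) * \<bar>y - y0\<bar>"
    using b'_bounds[OF x(1)] by (meson abs_ge_zero mult_right_mono)+
  then show "\<theta> / 100 * \<bar>y - y0\<bar> \<le> \<bar>b y - b y0\<bar>" "\<bar>b y - b y0\<bar> \<le> 1 / (100 * \<theta>) * \<bar>y - y0\<bar>"
    unfolding x(2) by (simp_all add: mult.commute)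
qed

lemma Re_D: "Re (D z) = b z - b y0" and Im_D: "Im (D z) = eps"
  by (simp_all add: den_def)

lemma D_notin_nonpos_Reals: "D z \<notin> \<real>\<^sub>\<le>\<^sub>0"
  using eps by (simp add: complex_nonpos_Reals_iff Im_D)

lemma D_nonzero: "D z \<noteq> 0"
  using eps by (metis Im_D zero_complex.sel(2))

lemma norm_D_ge: "y \<in> {0..1} \<Longrightarrow> \<theta> / 200 * (\<bar>y - y0\<bar> + \<bar>eps\<bar>) \<le> cmod (D y)"
proof -
  assume y: "y \<in> {0..1}"
  have "\<bar>eps\<bar> \<le> cmod (D y)" using abs_Im_le_cmod[of "D y"] by (simp add: Im_D)
  moreover have "\<theta> / 100 * \<bar>y - y0\<bar> \<le> cmod (D y)"
    using abs_Re_le_cmod[of "D y"] abs_b_diff_bounds(1)[OF y] by (simp add: Re_D)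
  moreover have "\<theta> / 200 * \<bar>eps\<bar> \<le> 1 / 2 * \<bar>eps\<bar>" using \<theta> by (intro mult_right_mono) auto
  ultimately show ?thesis by (simp add: algebra_simps)
qed

lemma norm_D_le: "y \<in> {0..1} \<Longrightarrow> cmod (D y) \<le> 1 / (100 * \<theta>) + 1/4"
proof -
  assume y: "y \<in> {0..1}"
  have "cmod (D y) \<le> \<bar>b y - b y0\<bar> + \<bar>eps\<bar>"
    using cmod_le[of "D y"] by (simp add: Re_D Im_D)
  also have "\<dots> \<le> 1 / (100 * \<theta>) + 1/4"
  proof (rule add_mono)
    have "1 / (100 * \<theta>) * \<bar>y - y0\<bar> \<le> 1 / (100 * \<theta>)"
      using y y0 \<theta> by (intro mult_right_le_one_le) auto
    then show "\<bar>b y - b y0\<bar> \<le> 1 / (100 * \<theta>)" using abs_b_diff_bounds(2)[OF y] by linarith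
  qed (use eps in auto)
  finally show ?thesis .
qed

text \<open>The shift by \<open>1 / \<theta>\<close> keeps the weight away from zero: \<open>Re (Lw y) \<le> -1\<close>.\<close>
lemma one_le_norm_Lw: "y \<in> {0..1} \<Longrightarrow> 1 \<le> cmod (Lw y)"
proof -
  assume y: "y \<in> {0..1}"
  have "Re (Lw y) = ln (cmod (D y)) - 1 / \<theta>" using D_nonzero by simp
  also have "ln (cmod (D y)) \<le> cmod (D y) - 1" using D_nonzero by (intro ln_le_minus_one) simp
  also have "cmod (D y) - 1 - 1 / \<theta> \<le> -1"
    using norm_D_le[OF y] \<theta> by (simp add: field_simps)
  finally show ?thesis using abs_Re_le_cmod[of "Lw y"] by simp
qed

lemma norm_logD_le: "y \<in> {0..1} \<Longrightarrow> cmod (logD y) \<le> (1 + 1 / \<theta>) * cmod (Lw y)"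
proof -
  assume y: "y \<in> {0..1}"
  have "cmod (logD y) \<le> cmod (Lw y) + 1 / \<theta>"
    using norm_triangle_ineq[of "Lw y" "complex_of_real (1 / \<theta>)"] \<theta> by (simp del: of_real_divide)
  also have "\<dots> \<le> cmod (Lw y) + 1 / \<theta> * cmod (Lw y)"
    using mult_left_mono[OF one_le_norm_Lw[OF y], of "1 / \<theta>"] \<theta> by simp
  finally show ?thesis by (simp add: algebra_simps)
qed

lemma norm_Lw_le: "y \<in> {0..1} \<Longrightarrow> cmod (Lw y) \<le> log_const \<theta> * (1 + \<bar>ln (\<bar>y - y0\<bar> + \<bar>eps\<bar>)\<bar>)"
proof -
  assume y: "y \<in> {0..1}"
  define t where "t = \<bar>y - y0\<bar> + \<bar>eps\<bar>"
  have t: "0 < t" using eps by (simp add: t_def add_nonneg_pos)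
  have D: "0 < cmod (D y)" using D_nonzero by simp
  have "ln (cmod (D y)) \<le> ln (1 / (100 * \<theta>) + 1)"
    using norm_D_le[OF y] D by (intro ln_mono) auto
  moreover have "ln (\<theta> / 200) + ln t \<le> ln (cmod (D y))"
  proof -
    have "ln (\<theta> / 200) + ln t = ln (\<theta> / 200 * t)" using \<theta> t by (intro ln_mult_pos[symmetric]) auto
    also have "\<dots> \<le> ln (cmod (D y))" using norm_D_ge[OF y] \<theta> t by (intro ln_mono) (auto simp: t_def)
    finally show ?thesis .
  qed
  moreover have "0 \<le> ln (1 / (100 * \<theta>) + 1)" using \<theta> by simp
  ultimately have lnD: "\<bar>ln (cmod (D y))\<bar> \<le> ln (1 / (100 * \<theta>) + 1) + \<bar>ln (\<theta> / 200)\<bar> + \<bar>ln t\<bar>"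
    unfolding abs_le_iff using abs_ge_minus_self[of "ln (\<theta> / 200)"] abs_ge_minus_self[of "ln t"]
    by linarith
  have "cmod (Lw y) \<le> cmod (logD y) + 1 / \<theta>"
    using norm_triangle_ineq4[of "logD y" "complex_of_real (1 / \<theta>)"] \<theta> by (simp del: of_real_divide)
  also have "cmod (logD y) \<le> \<bar>Re (logD y)\<bar> + \<bar>Im (logD y)\<bar>" by (rule cmod_le)
  also have "\<bar>Re (logD y)\<bar> = \<bar>ln (cmod (D y))\<bar>" using D_nonzero by simp
  also have "\<bar>Im (logD y)\<bar> \<le> pi"
    using Im_Ln_le_pi[OF D_nonzero] mpi_less_Im_Ln[OF D_nonzero, of y] by (simp add: abs_le_iff)
  finally have "cmod (Lw y) \<le> log_const \<theta> + \<bar>ln t\<bar>" using lnD unfolding log_const_def by linarith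
  also have "\<dots> \<le> log_const \<theta> * (1 + \<bar>ln t\<bar>)"
    using one_le_log_const[OF \<theta>] mult_right_mono[of 1 "log_const \<theta>" "\<bar>ln t\<bar>"]
    by (simp add: algebra_simps)
  finally show ?thesis by (simp add: t_def)
qed

lemma D_has_vector_derivative:
  "y \<in> {0..1} \<Longrightarrow> (D has_vector_derivative complex_of_real (b' y)) (at y within {0..1})"
  unfolding den_def
  by (auto intro!: derivative_eq_intros has_vector_derivative_of_real b'
      simp: has_real_derivative_iff_has_vector_derivative[symmetric])

lemma logD_has_vector_derivative:
  "y \<in> {0..1} \<Longrightarrow> (logD has_vector_derivative complex_of_real (b' y) / D y) (at y within {0..1})"
  using field_vector_diff_chain_within[OF D_has_vector_derivative
      has_field_derivative_at_within[OF has_field_derivative_Ln[OF D_notin_nonpos_Reals]]]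
  by (simp add: o_def divide_inverse)

lemma continuous_on_D: "continuous_on {0..1} D"
  by (rule continuous_on_of_has_vector_derivative[OF D_has_vector_derivative])

lemma continuous_on_Lw: "continuous_on {0..1} Lw"
  by (intro continuous_intros continuous_on_of_has_vector_derivative[OF logD_has_vector_derivative])

lemma Ynorm_le:
  assumes g: "diffI g"
    and g_le: "\<And>y. y \<in> {0..1} \<Longrightarrow> cmod (g y) \<le> A"
    and dg_le: "\<And>y. y \<in> {0..1} \<Longrightarrow> cmod (dI g y) \<le> \<bar>real_of_int k\<bar> * cmod (Lw y) ^ (1 + n) * A'"
  shows "Ynorm b \<theta> k y0 eps n g \<le> ereal (A + A')"
proof -
  have "cmod ((dI g y / complex_of_real \<bar>real_of_int k\<bar>) / Lw y ^ (1 + n)) \<le> A'" if y: "y \<in> {0..1}" for y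
  proof -
    have Kp: "0 < \<bar>real_of_int k\<bar>" using k by simp
    have Xp: "0 < cmod (Lw y) ^ (1 + n)" using one_le_norm_Lw[OF y] by (intro zero_less_power) linarith
    show ?thesis
      unfolding norm_divide norm_power norm_of_real abs_abs divide_divide_le_iff[OF Kp Xp]
      by (rule dg_le[OF y])
  qed
  then have "supnorm g + supnorm (\<lambda>y. (dI g y / complex_of_real \<bar>real_of_int k\<bar>) / Lw y ^ (1 + n))
      \<le> ereal A + ereal A'"
    using g_le by (intro add_mono supnorm_le) auto
  with g show ?thesis by (simp add: Ynorm_def)
qed

end

section \<open>The constants of the estimate\<close>

definition kernel_const :: "real \<Rightarrow> real" where
  "kernel_const \<theta> = log_const \<theta> ^ 7 * (1 + 2 / ln 2) ^ 7 * (2 ^ 8 + 4 * pi * 14 ^ 7)"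

lemma kernel_const_nonneg: "0 < \<theta> \<Longrightarrow> \<theta> < 1/10 \<Longrightarrow> 0 \<le> kernel_const \<theta>"
  using one_le_log_const[of \<theta>] by (simp add: kernel_const_def)

definition quot_const :: "real \<Rightarrow> real \<Rightarrow> real" where
  "quot_const \<theta> B = (100 / \<theta>) * (1 + B * (100 / \<theta>))"

text \<open>The summand \<open>3 / (ln 2 / 2) ^ 7\<close> pays for the terms without a logarithmic factor,
  using \<open>(ln 2 / 2) ^ 7 \<le> ln (jbr k) ^ (m + 2)\<close>.\<close>
definition final_const :: "real \<Rightarrow> real \<Rightarrow> real" where
  "final_const \<theta> B = quot_const \<theta> B * (1 + 1 / \<theta>) * (12 * kernel_const \<theta> + 3 / (ln 2 / 2) ^ 7) + 1"

lemma constants_le_final_const: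
  fixes \<theta> B K L Y :: real
  assumes \<theta>: "0 < \<theta>" "\<theta> < 1/10" and B: "0 \<le> B" and K: "1 \<le> K" and Y: "0 \<le> Y"
    and L: "(ln 2 / 2) ^ 7 \<le> L"
  defines "G \<equiv> quot_const \<theta> B" and "t \<equiv> 1 + 1 / \<theta>" and "J \<equiv> kernel_const \<theta> * L"
  shows "4 * (G * Y * t) * J / K + 1 / K * ((G * Y + G * Y) + (4 * (G * Y * t) * J
      + (4 * (G * Y * t) * J + t * (G * Y))))
   \<le> final_const \<theta> B / K * L * Y"
proof -
  define l0 where "l0 = ln 2 / (2::real)"
  have G0: "0 \<le> G" using \<theta> B by (simp add: G_def quot_const_def)
  have t: "1 \<le> t" using \<theta> by (simp add: t_def)
  have l0: "0 < l0" by (simp add: l0_def)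
  have three: "3 \<le> 3 / l0 ^ 7 * L" using L l0 by (simp add: l0_def field_simps)
  have "0 \<le> (ln 2 / 2 :: real) ^ 7" by simp
  with L have L0: "0 \<le> L" by linarith
  have "(2 + t) * (G * Y) \<le> (3 * t) * (G * Y)" using t G0 Y by (intro mult_right_mono) auto
  also have "\<dots> = G * t * Y * 3" by (simp add: mult_ac)
  also have "\<dots> \<le> G * t * Y * (3 / l0 ^ 7 * L)" using three G0 t Y by (intro mult_left_mono) auto
  finally have "12 * (G * Y * t) * J + (2 + t) * (G * Y)
      \<le> (G * t * (12 * kernel_const \<theta> + 3 / l0 ^ 7)) * L * Y"
    by (simp add: J_def algebra_simps)
  also have "\<dots> \<le> final_const \<theta> B * L * Y"
    using L0 Y by (intro mult_right_mono) (auto simp: final_const_def G_def t_def l0_def)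
  finally have core: "12 * (G * Y * t) * J + (2 + t) * (G * Y) \<le> final_const \<theta> B * L * Y" .
  have "4 * (G * Y * t) * J / K + 1 / K * ((G * Y + G * Y) + (4 * (G * Y * t) * J
      + (4 * (G * Y * t) * J + t * (G * Y))))
      = 1 / K * (12 * (G * Y * t) * J + (2 + t) * (G * Y))"
    by (simp add: algebra_simps add_divide_distrib)
  also have "\<dots> \<le> 1 / K * (final_const \<theta> B * L * Y)" using core K by (intro mult_left_mono) auto
  finally show ?thesis by simp
qed

lemma one_less_final_const:
  assumes "0 < \<theta>" "\<theta> < 1/10" "0 \<le> B"
  shows "1 < final_const \<theta> B"
proof -
  have "0 < quot_const \<theta> B" using assms by (simp add: quot_const_def add_pos_nonneg)
  moreover have "0 < 12 * kernel_const \<theta> + 3 / (ln 2 / 2) ^ 7"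
    using kernel_const_nonneg[OF assms(1,2)] by (simp add: add_nonneg_pos)
  moreover have "0 < 1 + 1 / \<theta>" using assms by (simp add: add_pos_pos)
  ultimately show ?thesis unfolding final_const_def by simp
qed

section \<open>The operator \<open>Top\<close> and its Green's function representation\<close>

locale Top_setting = den_setting +
  fixes m :: nat and f :: "real \<Rightarrow> complex"
  assumes m: "1 \<le> m" "m \<le> 5" and Ynorm_f_finite: "Ynorm b \<theta> k y0 eps m f < \<infinity>"
begin

abbreviation "kr \<equiv> real_of_int k"
abbreviation "K \<equiv> \<bar>kr\<bar>"
abbreviation "Mf \<equiv> real_of_ereal (supnorm f)"
abbreviation "Mdf \<equiv> real_of_ereal (supnorm (\<lambda>y. (dI f y / complex_of_real K) / Lw y ^ (1 + m)))"
abbreviation "Yf \<equiv> Mf + Mdf"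

text \<open>The integrand of \<open>Top\<close> is \<open>f / D = r * logD'\<close>; integrating by parts moves the
  derivative onto \<open>r\<close>.\<close>
abbreviation "r \<equiv> \<lambda>z. f z * complex_of_real (inverse (b' z))"
abbreviation "dr \<equiv> \<lambda>z. f z * complex_of_real (- (b'' z / b' z ^ 2)) + dI f z * complex_of_real (inverse (b' z))"

lemma one_le_K: "1 \<le> K"
  using k by linarith

lemma diffI_f: "diffI f"
  using Ynorm_f_finite by (auto simp: Ynorm_def split: if_splits)

lemma Ynorm_f_eq: "Ynorm b \<theta> k y0 eps m f = ereal Yf"
  and norm_f_le: "y \<in> {0..1} \<Longrightarrow> cmod (f y) \<le> Mf"
  and norm_df_le: "y \<in> {0..1} \<Longrightarrow> cmod (dI f y) \<le> K * cmod (Lw y) ^ (1 + m) * Mdf"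
proof -
  let ?w = "\<lambda>y. (dI f y / complex_of_real K) / Lw y ^ (1 + m)"
  have sum: "Ynorm b \<theta> k y0 eps m f = supnorm f + supnorm ?w"
    using diffI_f by (simp add: Ynorm_def)
  then have fin: "supnorm f < \<infinity>" "supnorm ?w < \<infinity>"
    using Ynorm_f_finite supnorm_nonneg[of f] supnorm_nonneg[of ?w]
    by (cases "supnorm f"; cases "supnorm ?w"; simp)+
  show "Ynorm b \<theta> k y0 eps m f = ereal Yf"
    unfolding sum by (subst supnorm_finite(1)[OF fin(1)], subst supnorm_finite(1)[OF fin(2)]) simp
  show "cmod (f y) \<le> Mf" if "y \<in> {0..1}" by (rule supnorm_finite(2)[OF fin(1) that])
  show "cmod (dI f y) \<le> K * cmod (Lw y) ^ (1 + m) * Mdf" if y: "y \<in> {0..1}"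
  proof -
    have Kp: "0 < K" using one_le_K by simp
    have Xp: "0 < cmod (Lw y) ^ (1 + m)" using one_le_norm_Lw[OF y] by (intro zero_less_power) linarith
    show ?thesis using supnorm_finite(2)[OF fin(2) y]
      unfolding norm_divide norm_power norm_of_real abs_abs divide_divide_le_iff[OF Kp Xp] .
  qed
qed

lemma f_has_vector_derivative: "y \<in> {0..1} \<Longrightarrow> (f has_vector_derivative dI f y) (at y within {0..1})"
  using diffI_f by (simp add: diffI_def dI_def vector_derivative_works)

lemma r_has_vector_derivative: "y \<in> {0..1} \<Longrightarrow> (r has_vector_derivative dr y) (at y within {0..1})"
proof -
  assume y: "y \<in> {0..1}"
  have "((\<lambda>z. inverse (b' z)) has_real_derivative - (b'' y / b' y ^ 2)) (at y within {0..1})"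
    using DERIV_inverse_fun[OF b''[OF y] b'_nonzero[OF y]] by (simp add: divide_inverse power2_eq_square)
  from has_vector_derivative_mult[OF f_has_vector_derivative[OF y] has_vector_derivative_of_real[OF this]]
  show ?thesis .
qed

lemma abs_inverse_b'_le: "y \<in> {0..1} \<Longrightarrow> \<bar>inverse (b' y)\<bar> \<le> 100 / \<theta>"
  using b'_bounds[of y] \<theta> le_imp_inverse_le[of "\<theta> / 100" "\<bar>b' y\<bar>"] by simp

lemma norm_r_le: "y \<in> {0..1} \<Longrightarrow> cmod (r y) \<le> Mf * (100 / \<theta>)"
  unfolding norm_mult norm_of_real
  by (rule mult_mono[OF norm_f_le abs_inverse_b'_le real_supnorm_nonneg abs_ge_zero])

lemma norm_dr_le: "y \<in> {0..1} \<Longrightarrow> cmod (dr y) \<le> Mf * (B * (100 / \<theta>) ^ 2) + K * cmod (Lw y) ^ (1 + m) * Mdf * (100 / \<theta>)"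
proof -
  assume y: "y \<in> {0..1}"
  have "\<bar>b'' y / b' y ^ 2\<bar> = \<bar>b'' y\<bar> * \<bar>inverse (b' y)\<bar> ^ 2"
    by (simp add: abs_mult power2_eq_square divide_inverse)
  also have "\<dots> \<le> B * (100 / \<theta>) ^ 2"
    using b''_bound[OF y] abs_inverse_b'_le[OF y] by (intro mult_mono power_mono) auto
  finally have quot: "\<bar>b'' y / b' y ^ 2\<bar> \<le> B * (100 / \<theta>) ^ 2" .
  have "cmod (dr y) \<le> cmod (f y) * \<bar>b'' y / b' y ^ 2\<bar> + cmod (dI f y) * \<bar>inverse (b' y)\<bar>"
    using norm_triangle_ineq[of "f y * complex_of_real (- (b'' y / b' y ^ 2))"
        "dI f y * complex_of_real (inverse (b' y))"]
    by (simp only: norm_mult norm_of_real abs_minus_cancel)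
  also have "\<dots> \<le> Mf * (B * (100 / \<theta>) ^ 2) + K * cmod (Lw y) ^ (1 + m) * Mdf * (100 / \<theta>)"
    using real_supnorm_nonneg
    by (intro add_mono mult_mono norm_f_le[OF y] quot norm_df_le[OF y] abs_inverse_b'_le[OF y]) auto
  finally show ?thesis .
qed

lemma K_norm_r_plus_norm_dr_le:
  "y \<in> {0..1} \<Longrightarrow> K * cmod (r y) + cmod (dr y) \<le> K * cmod (Lw y) ^ (1 + m) * (quot_const \<theta> B * Yf)"
proof -
  assume y: "y \<in> {0..1}"
  define c where "c = 100 / \<theta>"
  define X where "X = cmod (Lw y) ^ (1 + m)"
  have c: "0 \<le> c" using \<theta> by (simp add: c_def)
  have X: "1 \<le> X" unfolding X_def using one_le_norm_Lw[OF y] by (rule one_le_power)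
  have KX: "1 \<le> K * X" using one_le_K X by (metis mult_mono' mult_1 zero_le_one)
  have M: "0 \<le> Mf" "0 \<le> Mdf" by (rule real_supnorm_nonneg)+
  have "K * cmod (r y) \<le> K * (Mf * c)"
    using mult_left_mono[OF norm_r_le[OF y], of K] one_le_K by (simp add: c_def)
  also have "\<dots> \<le> K * X * (Mf * c)"
    using mult_left_mono[OF X, of "K * (Mf * c)"] one_le_K M c by (simp add: mult_ac)
  finally have r_le: "K * cmod (r y) \<le> K * X * (Mf * c)" .
  have "Mf * (B * c ^ 2) \<le> K * X * (Mf * (B * c ^ 2))"
    using mult_right_mono[OF KX, of "Mf * (B * c ^ 2)"] M B_nonneg c by simp
  then have dr_le: "cmod (dr y) \<le> K * X * (Mf * (B * c ^ 2)) + K * X * (Mdf * c)"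
    using norm_dr_le[OF y] by (simp add: c_def X_def mult_ac)
  have "Mf * c + Mf * (B * c ^ 2) + Mdf * c \<le> quot_const \<theta> B * Yf"
    using mult_right_mono[of Mf Yf "B * c ^ 2"] M B_nonneg
    by (simp add: quot_const_def c_def[symmetric] power2_eq_square algebra_simps)
  then have "K * X * (Mf * c + Mf * (B * c ^ 2) + Mdf * c) \<le> K * X * (quot_const \<theta> B * Yf)"
    using KX by (intro mult_left_mono) auto
  with r_le dr_le show ?thesis by (simp add: X_def algebra_simps)
qed

lemma norm_dr_le_quot_const: "y \<in> {0..1} \<Longrightarrow> cmod (dr y) \<le> K * cmod (Lw y) ^ (1 + m) * (quot_const \<theta> B * Yf)"
  using K_norm_r_plus_norm_dr_le[of y] one_le_K by (smt (verit) mult_nonneg_nonneg norm_ge_zero)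

abbreviation "sK \<equiv> kr * sinh kr"
abbreviation "F \<equiv> \<lambda>z. f z / D z"
abbreviation "Sa \<equiv> \<lambda>z. complex_of_real (sinh (kr * z))"
abbreviation "Sb \<equiv> \<lambda>z. complex_of_real (sinh (kr * (1 - z)))"
abbreviation "Ca \<equiv> \<lambda>z. complex_of_real (cosh (kr * z))"
abbreviation "Cb \<equiv> \<lambda>z. complex_of_real (cosh (kr * (1 - z)))"
abbreviation "P \<equiv> \<lambda>y. integral {y..1} (\<lambda>z. Sb z * F z)"
abbreviation "Q \<equiv> \<lambda>y. integral {0..y} (\<lambda>z. Sa z * F z)"
abbreviation "U \<equiv> \<lambda>y. complex_of_real (1 / sK) * (Sa y * P y + Sb y * Q y)"
abbreviation "dU \<equiv> \<lambda>y. complex_of_real (kr / sK) * (Ca y * P y - Cb y * Q y)"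

lemma sK_eq: "sK = K * sinh K"
proof -
  have "K * sinh K = \<bar>sK\<bar>" by (simp add: abs_mult)
  also have "\<bar>sK\<bar> = sK" using k by (cases "0 < k") (auto simp: mult_neg_neg intro!: abs_of_pos)
  finally show ?thesis by simp
qed

lemma sK_pos: "0 < sK"
  using one_le_K by (simp add: sK_eq)

lemma sinh_add_sinh_identity:
  "Ca y * Sb y + Cb y * Sa y = complex_of_real (sinh kr)"
proof -
  have "sinh (kr * y + kr * (1 - y)) = sinh (kr * y) * cosh (kr * (1 - y)) + cosh (kr * y) * sinh (kr * (1 - y))"
    by (rule sinh_add)
  then show ?thesis
    by (simp add: algebra_simps flip: of_real_mult of_real_add)
qed

lemma continuous_on_Sa_F: "continuous_on {0..1} (\<lambda>z. Sa z * F z)"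
  and continuous_on_Sb_F: "continuous_on {0..1} (\<lambda>z. Sb z * F z)"
proof -
  have "continuous_on {0..1} f"
    by (rule continuous_on_of_has_vector_derivative[OF f_has_vector_derivative])
  then have F: "continuous_on {0..1} F"
    using D_nonzero by (intro continuous_on_divide continuous_on_D) auto
  show "continuous_on {0..1} (\<lambda>z. Sa z * F z)" "continuous_on {0..1} (\<lambda>z. Sb z * F z)"
    by (intro continuous_intros F)+
qed

text \<open>Splitting the Green's function at \<open>z = y\<close>.\<close>
lemma Top_eq_U:
  assumes y: "y \<in> {0..1}"
  shows "Top b k y0 eps f y = U y"
proof -
  define G where "G = (\<lambda>z. complex_of_real (Green k y z) * f z / D z)"
  have G_left: "G z = complex_of_real (sinh (kr * (1 - y)) / sK) * (Sa z * F z)" if "z \<in> {0..y}" for z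
  proof (cases "y \<le> z")
    case True
    with that have "z = y" by auto
    then show ?thesis by (simp add: G_def Green_def mult_ac)
  qed (simp add: G_def Green_def mult_ac)
  have G_right: "G z = complex_of_real (sinh (kr * y) / sK) * (Sb z * F z)" if "z \<in> {y..1}" for z
    using that by (simp add: G_def Green_def mult_ac)
  have y': "0 \<le> y" "y \<le> 1" using y by auto
  have int_Sa_F: "(\<lambda>z. Sa z * F z) integrable_on {0..y}"
    using y' by (intro integrable_on_subinterval[OF integrable_continuous_interval[OF continuous_on_Sa_F]]) auto
  have int_Sb_F: "(\<lambda>z. Sb z * F z) integrable_on {y..1}"
    using y' by (intro integrable_on_subinterval[OF integrable_continuous_interval[OF continuous_on_Sb_F]]) auto
  have "G integrable_on {0..y}"
    by (rule integrable_eq[OF integrable_on_mult_right[OF int_Sa_F,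
          of "complex_of_real (sinh (kr * (1 - y)) / sK)"]]) (metis G_left)
  moreover have "G integrable_on {y..1}"
    by (rule integrable_eq[OF integrable_on_mult_right[OF int_Sb_F,
          of "complex_of_real (sinh (kr * y) / sK)"]]) (metis G_right)
  ultimately have "G integrable_on {0..1}"
    by (rule Henstock_Kurzweil_Integration.integrable_combine[OF y'])
  have "Top b k y0 eps f y = integral {0..1} G" by (simp add: Top_def G_def)
  also have "\<dots> = integral {0..y} G + integral {y..1} G"
    using Henstock_Kurzweil_Integration.integral_combine[OF y' \<open>G integrable_on {0..1}\<close>] by simp
  also have "integral {0..y} G = complex_of_real (sinh (kr * (1 - y)) / sK) * Q y"
    by (subst integral_cong[OF G_left]) (simp_all only: integral_mult_right)
  also have "integral {y..1} G = complex_of_real (sinh (kr * y) / sK) * P y"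
    by (subst integral_cong[OF G_right]) (simp_all only: integral_mult_right)
  finally show ?thesis by (simp add: algebra_simps)
qed

lemma Q_has_vector_derivative: "y \<in> {0..1} \<Longrightarrow> (Q has_vector_derivative Sa y * F y) (at y within {0..1})"
  by (rule integral_has_vector_derivative[OF continuous_on_Sa_F])

lemma P_has_vector_derivative:
  assumes y: "y \<in> {0..1}"
  shows "(P has_vector_derivative - (Sb y * F y)) (at y within {0..1})"
proof -
  define I where "I = integral {0..1} (\<lambda>z. Sb z * F z)"
  have eq: "P x = I - integral {0..x} (\<lambda>z. Sb z * F z)" if "x \<in> {0..1}" for x
    using that Henstock_Kurzweil_Integration.integral_combine[of 0 x 1,
        OF _ _ integrable_continuous_interval[OF continuous_on_Sb_F]]
    by (simp add: I_def algebra_simps)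
  have "((\<lambda>x. I - integral {0..x} (\<lambda>z. Sb z * F z)) has_vector_derivative 0 - Sb y * F y)
      (at y within {0..1})"
    by (intro has_vector_derivative_diff has_vector_derivative_const
        integral_has_vector_derivative[OF continuous_on_Sb_F y])
  then show ?thesis
    using has_vector_derivative_transform[OF y eq] by simp
qed

lemma Sa_has_vector_derivative: "(Sa has_vector_derivative complex_of_real (kr * cosh (kr * y))) (at y within S)"
  and Sb_has_vector_derivative: "(Sb has_vector_derivative complex_of_real (- (kr * cosh (kr * (1 - y))))) (at y within S)"
  and Ca_has_vector_derivative: "(Ca has_vector_derivative complex_of_real (kr * sinh (kr * y))) (at y within S)"
  and Cb_has_vector_derivative: "(Cb has_vector_derivative complex_of_real (- (kr * sinh (kr * (1 - y))))) (at y within S)"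
  by (auto intro!: has_vector_derivative_at_within[OF has_vector_derivative_of_real] derivative_eq_intros)

lemma U_has_vector_derivative:
  assumes y: "y \<in> {0..1}"
  shows "(U has_vector_derivative dU y) (at y within {0..1})"
proof -
  let ?dU = "complex_of_real (1 / sK)
      * ((Sa y * (- (Sb y * F y)) + complex_of_real (kr * cosh (kr * y)) * P y)
        + (Sb y * (Sa y * F y) + complex_of_real (- (kr * cosh (kr * (1 - y)))) * Q y))
     + 0 * (Sa y * P y + Sb y * Q y)"
  have "(U has_vector_derivative ?dU) (at y within {0..1})"
    by (intro has_vector_derivative_mult has_vector_derivative_add has_vector_derivative_const
        Sa_has_vector_derivative Sb_has_vector_derivative P_has_vector_derivative[OF y]
        Q_has_vector_derivative[OF y])
  moreover have "?dU = dU y"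
  proof -
    have "c * ((sa * (- (sb * w)) + (kk * ca) * p) + (sb * (sa * w) + (- (kk * cb)) * q)) + 0 * x
        = (c * kk) * (ca * p - cb * q)" for c sa sb p q w x ca cb kk :: complex
      by (simp add: algebra_simps)
    then have "?dU = (complex_of_real (1 / sK) * complex_of_real kr) * (Ca y * P y - Cb y * Q y)"
      unfolding of_real_mult of_real_minus .
    also have "complex_of_real (1 / sK) * complex_of_real kr = complex_of_real (kr / sK)"
      by (simp only: of_real_mult[symmetric]) simp
    finally show ?thesis .
  qed
  ultimately show ?thesis by simp
qed

lemma dU_has_vector_derivative:
  assumes y: "y \<in> {0..1}"
  shows "(dU has_vector_derivative complex_of_real (kr ^ 2) * U y - F y) (at y within {0..1})"
proof -
  let ?ddU = "complex_of_real (kr / sK)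
      * ((Ca y * (- (Sb y * F y)) + complex_of_real (kr * sinh (kr * y)) * P y)
        - (Cb y * (Sa y * F y) + complex_of_real (- (kr * sinh (kr * (1 - y)))) * Q y))
     + 0 * (Ca y * P y - Cb y * Q y)"
  have "(dU has_vector_derivative ?ddU) (at y within {0..1})"
    by (intro has_vector_derivative_mult has_vector_derivative_diff has_vector_derivative_const
        Ca_has_vector_derivative Cb_has_vector_derivative P_has_vector_derivative[OF y]
        Q_has_vector_derivative[OF y])
  moreover have "?ddU = complex_of_real (kr ^ 2) * U y - F y"
  proof -
    have one: "complex_of_real (kr / sK) * complex_of_real (sinh kr) = 1"
    proof -
      have "kr / sK * sinh kr = 1" using sK_pos k by (simp add: field_simps)
      then show ?thesis by (simp only: of_real_mult[symmetric]) simp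
    qed
    have "c * ((ca * (- (sb * w)) + (kk * sa) * p) - (cb * (sa * w) + (- (kk * sb)) * q)) + 0 * x
        = c * kk * (sa * p + sb * q) - c * (ca * sb + cb * sa) * w" for c sa sb p q w x ca cb kk :: complex
      by (simp add: algebra_simps)
    then have "?ddU = complex_of_real (kr / sK) * complex_of_real kr * (Sa y * P y + Sb y * Q y)
        - complex_of_real (kr / sK) * (Ca y * Sb y + Cb y * Sa y) * F y"
      unfolding of_real_mult of_real_minus .
    also have "complex_of_real (kr / sK) * complex_of_real kr = complex_of_real (kr ^ 2) * complex_of_real (1 / sK)"
      by (simp only: of_real_mult[symmetric]) (simp add: power2_eq_square)
    finally show ?thesis
      unfolding sinh_add_sinh_identity one by (simp only: mult.assoc mult_1_left)
  qed
  ultimately show ?thesis by simp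
qed

section \<open>Integration by parts\<close>

text \<open>The Green's kernel, multiplied by the factor \<open>K\<close> gained from differentiating,
  decays like \<open>exp (- K * \<bar>y - z\<bar>)\<close>.\<close>
lemma cosh_mult_cosh_le:
  assumes a: "0 \<le> a" and c: "0 \<le> c"
  shows "cosh (kr * a) * cosh (kr * c) * K \<le> 4 * sK * exp (- K * (1 - a - c))"
proof -
  have "cosh (kr * a) \<le> exp (K * a)" "cosh (kr * c) \<le> exp (K * c)"
    using cosh_le_exp_abs[of "kr * a"] cosh_le_exp_abs[of "kr * c"] a c by (simp_all add: abs_mult)
  then have "cosh (kr * a) * cosh (kr * c) * K \<le> exp (K * a) * exp (K * c) * K"
    using one_le_K by (intro mult_right_mono mult_mono) auto
  also have "exp (K * a) * exp (K * c) = exp K * exp (- K * (1 - a - c))"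
    by (simp add: exp_add[symmetric] algebra_simps)
  also have "exp K * exp (- K * (1 - a - c)) * K \<le> (4 * sinh K) * exp (- K * (1 - a - c)) * K"
    using exp_le_4_sinh[OF one_le_K] one_le_K by (intro mult_right_mono) auto
  also have "\<dots> = 4 * sK * exp (- K * (1 - a - c))" by (simp add: sK_eq)
  finally show ?thesis .
qed

abbreviation "Ba \<equiv> \<lambda>z. Sa z * r z * logD z"
abbreviation "Bb \<equiv> \<lambda>z. Sb z * r z * logD z"
abbreviation "Wa \<equiv> \<lambda>z. (complex_of_real (kr * cosh (kr * z)) * r z + Sa z * dr z) * logD z"
abbreviation "Wb \<equiv> \<lambda>z. (complex_of_real (- (kr * cosh (kr * (1 - z)))) * r z + Sb z * dr z) * logD z"

lemma r_mult_logD_derivative: "y \<in> {0..1} \<Longrightarrow> r y * (complex_of_real (b' y) / D y) = F y"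
  using b'_nonzero[of y] by (simp add: field_simps of_real_inverse[symmetric])

lemma Ba_has_vector_derivative:
  assumes y: "y \<in> {0..1}"
  shows "(Ba has_vector_derivative Wa y + Sa y * F y) (at y within {0..1})"
proof -
  have "(Ba has_vector_derivative Sa y * r y * (complex_of_real (b' y) / D y)
      + (Sa y * dr y + complex_of_real (kr * cosh (kr * y)) * r y) * logD y) (at y within {0..1})"
    by (intro has_vector_derivative_mult Sa_has_vector_derivative r_has_vector_derivative[OF y]
        logD_has_vector_derivative[OF y])
  moreover have "Sa y * r y * (complex_of_real (b' y) / D y) = Sa y * F y"
    using r_mult_logD_derivative[OF y] by (simp only: mult.assoc)
  moreover have "a + (b + c) * d = (c + b) * d + a" for a b c d :: complex
    by (simp add: algebra_simps)
  ultimately show ?thesis by metis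
qed

lemma Bb_has_vector_derivative:
  assumes y: "y \<in> {0..1}"
  shows "(Bb has_vector_derivative Wb y + Sb y * F y) (at y within {0..1})"
proof -
  have "(Bb has_vector_derivative Sb y * r y * (complex_of_real (b' y) / D y)
      + (Sb y * dr y + complex_of_real (- (kr * cosh (kr * (1 - y)))) * r y) * logD y) (at y within {0..1})"
    by (intro has_vector_derivative_mult Sb_has_vector_derivative r_has_vector_derivative[OF y]
        logD_has_vector_derivative[OF y])
  moreover have "Sb y * r y * (complex_of_real (b' y) / D y) = Sb y * F y"
    using r_mult_logD_derivative[OF y] by (simp only: mult.assoc)
  moreover have "a + (b + c) * d = (c + b) * d + a" for a b c d :: complex
    by (simp add: algebra_simps)
  ultimately show ?thesis by metis
qed

text \<open>Integration by parts; the boundary terms at \<open>0\<close> and \<open>1\<close> vanish with \<open>sinh 0\<close>.\<close>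
lemma Wa_has_integral: "y \<in> {0..1} \<Longrightarrow> (Wa has_integral Ba y - Q y) {0..y}"
proof -
  assume y: "y \<in> {0..1}"
  then have sub: "{0..y} \<subseteq> {0..1}" by auto
  have "((\<lambda>z. Wa z + Sa z * F z) has_integral Ba y - Ba 0) {0..y}"
    using y sub by (intro fundamental_theorem_of_calculus has_vector_derivative_within_subset[OF
          Ba_has_vector_derivative]) auto
  moreover have "((\<lambda>z. Sa z * F z) has_integral Q y) {0..y}"
    using integrable_on_subinterval[OF integrable_continuous_interval[OF continuous_on_Sa_F] sub]
    by (simp add: has_integral_integral)
  ultimately have "((\<lambda>z. (Wa z + Sa z * F z) - Sa z * F z) has_integral Ba y - Ba 0 - Q y) {0..y}"
    by (rule has_integral_diff)
  then show ?thesis by simp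
qed

lemma Wb_has_integral: "y \<in> {0..1} \<Longrightarrow> (Wb has_integral - Bb y - P y) {y..1}"
proof -
  assume y: "y \<in> {0..1}"
  then have sub: "{y..1} \<subseteq> {0..1}" by auto
  have "((\<lambda>z. Wb z + Sb z * F z) has_integral Bb 1 - Bb y) {y..1}"
    using y sub by (intro fundamental_theorem_of_calculus has_vector_derivative_within_subset[OF
          Bb_has_vector_derivative]) auto
  moreover have "((\<lambda>z. Sb z * F z) has_integral P y) {y..1}"
    using integrable_on_subinterval[OF integrable_continuous_interval[OF continuous_on_Sb_F] sub]
    by (simp add: has_integral_integral)
  ultimately have "((\<lambda>z. (Wb z + Sb z * F z) - Sb z * F z) has_integral Bb 1 - Bb y - P y) {y..1}"
    by (rule has_integral_diff)
  then show ?thesis by simp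
qed

abbreviation "E \<equiv> quot_const \<theta> B * Yf * (1 + 1 / \<theta>)"
abbreviation "Nw \<equiv> \<lambda>z. cmod (Lw z) ^ (m + 2)"
abbreviation "JR \<equiv> \<lambda>y. integral {y..1} (\<lambda>z. exp (- K * (z - y)) * Nw z)"
abbreviation "JL \<equiv> \<lambda>y. integral {0..y} (\<lambda>z. exp (- K * (y - z)) * Nw z)"

lemma quot_const_nonneg: "0 \<le> quot_const \<theta> B"
  using \<theta> B_nonneg by (simp add: quot_const_def)

lemma E_nonneg: "0 \<le> E"
  using quot_const_nonneg real_supnorm_nonneg \<theta> by simp

lemma norm_remainder_le:
  assumes z: "z \<in> {0..1}" and c: "\<bar>kc\<bar> \<le> K * ch" "\<bar>sh\<bar> \<le> ch"
  shows "cmod ((complex_of_real kc * r z + complex_of_real sh * dr z) * logD z) \<le> ch * K * Nw z * E"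
proof -
  have "cmod (complex_of_real kc * r z + complex_of_real sh * dr z) \<le> \<bar>kc\<bar> * cmod (r z) + \<bar>sh\<bar> * cmod (dr z)"
    using norm_triangle_ineq[of "complex_of_real kc * r z" "complex_of_real sh * dr z"]
    by (simp only: norm_mult norm_of_real)
  also have "\<dots> \<le> ch * (K * cmod (r z) + cmod (dr z))"
    using mult_right_mono[OF c(1), of "cmod (r z)"] mult_right_mono[OF c(2), of "cmod (dr z)"]
    by (simp add: algebra_simps)
  also have "\<dots> \<le> ch * (K * cmod (Lw z) ^ (1 + m) * (quot_const \<theta> B * Yf))"
    using K_norm_r_plus_norm_dr_le[OF z] c by (intro mult_left_mono) auto
  finally have first: "cmod (complex_of_real kc * r z + complex_of_real sh * dr z)
      \<le> ch * (K * cmod (Lw z) ^ (1 + m) * (quot_const \<theta> B * Yf))" .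
  have "cmod ((complex_of_real kc * r z + complex_of_real sh * dr z) * logD z)
      \<le> ch * (K * cmod (Lw z) ^ (1 + m) * (quot_const \<theta> B * Yf)) * ((1 + 1 / \<theta>) * cmod (Lw z))"
    unfolding norm_mult using c quot_const_nonneg real_supnorm_nonneg
    by (intro mult_mono[OF first norm_logD_le[OF z]] mult_nonneg_nonneg add_nonneg_nonneg) auto
  also have "\<dots> = ch * K * Nw z * E" by (simp add: power_add mult_ac)
  finally show ?thesis .
qed

lemma norm_Wa_le: "z \<in> {0..1} \<Longrightarrow> cmod (Wa z) \<le> cosh (kr * z) * K * Nw z * E"
  by (rule norm_remainder_le) (auto simp: abs_mult abs_sinh_le_cosh)

lemma norm_Wb_le: "z \<in> {0..1} \<Longrightarrow> cmod (Wb z) \<le> cosh (kr * (1 - z)) * K * Nw z * E"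
  by (rule norm_remainder_le) (auto simp: abs_mult abs_sinh_le_cosh)

lemma continuous_on_Nw: "continuous_on {0..1} Nw"
  by (intro continuous_intros continuous_on_Lw)

lemma weighted_norm_integral_Wb_le:
  assumes y: "y \<in> {0..1}" and w: "0 \<le> w" "w \<le> cosh (kr * y)"
  shows "w * cmod (integral {y..1} Wb) \<le> 4 * sK * E * JR y"
proof -
  have sub: "{y..1} \<subseteq> {0..1}" using y by auto
  define g where "g = (\<lambda>z. cosh (kr * (1 - z)) * K * Nw z * E)"
  have g: "g integrable_on {y..1}" unfolding g_def
    by (intro integrable_continuous_interval continuous_intros continuous_on_subset[OF continuous_on_Nw] sub)
  have "cmod (integral {y..1} Wb) \<le> integral {y..1} g"
    using sub norm_Wb_le
    by (intro integral_norm_bound_integral[OF has_integral_integrable[OF Wb_has_integral[OF y]] g])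
      (auto simp: g_def)
  then have "w * cmod (integral {y..1} Wb) \<le> integral {y..1} (\<lambda>z. w * g z)"
    using w by (simp add: mult_left_mono)
  also have "\<dots> \<le> integral {y..1} (\<lambda>z. (4 * sK * E) * (exp (- K * (z - y)) * Nw z))"
  proof (rule integral_le)
    show "(\<lambda>z. w * g z) integrable_on {y..1}" by (rule integrable_on_mult_right[OF g])
    show "(\<lambda>z. (4 * sK * E) * (exp (- K * (z - y)) * Nw z)) integrable_on {y..1}"
      by (intro integrable_on_mult_right integrable_continuous_interval continuous_intros
          continuous_on_subset[OF continuous_on_Nw] sub)
  next
    fix z assume z: "z \<in> {y..1}"
    have "w * cosh (kr * (1 - z)) * K \<le> cosh (kr * y) * cosh (kr * (1 - z)) * K"
      using w one_le_K by (intro mult_right_mono) auto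
    also have "\<dots> \<le> 4 * sK * exp (- K * (z - y))"
      using cosh_mult_cosh_le[of y "1 - z"] z y by simp
    finally show "w * g z \<le> (4 * sK * E) * (exp (- K * (z - y)) * Nw z)"
      using mult_right_mono[OF _ mult_nonneg_nonneg[OF norm_ge_zero[THEN zero_le_power] E_nonneg]]
      unfolding g_def by (smt (verit, best) mult.assoc mult.commute)
  qed
  also have "\<dots> = 4 * sK * E * JR y" by (rule integral_mult_right)
  finally show ?thesis .
qed

lemma weighted_norm_integral_Wa_le:
  assumes y: "y \<in> {0..1}" and w: "0 \<le> w" "w \<le> cosh (kr * (1 - y))"
  shows "w * cmod (integral {0..y} Wa) \<le> 4 * sK * E * JL y"
proof -
  have sub: "{0..y} \<subseteq> {0..1}" using y by auto
  define g where "g = (\<lambda>z. cosh (kr * z) * K * Nw z * E)"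
  have g: "g integrable_on {0..y}" unfolding g_def
    by (intro integrable_continuous_interval continuous_intros continuous_on_subset[OF continuous_on_Nw] sub)
  have "cmod (integral {0..y} Wa) \<le> integral {0..y} g"
    using sub norm_Wa_le
    by (intro integral_norm_bound_integral[OF has_integral_integrable[OF Wa_has_integral[OF y]] g])
      (auto simp: g_def)
  then have "w * cmod (integral {0..y} Wa) \<le> integral {0..y} (\<lambda>z. w * g z)"
    using w by (simp add: mult_left_mono)
  also have "\<dots> \<le> integral {0..y} (\<lambda>z. (4 * sK * E) * (exp (- K * (y - z)) * Nw z))"
  proof (rule integral_le)
    show "(\<lambda>z. w * g z) integrable_on {0..y}" by (rule integrable_on_mult_right[OF g])
    show "(\<lambda>z. (4 * sK * E) * (exp (- K * (y - z)) * Nw z)) integrable_on {0..y}"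
      by (intro integrable_on_mult_right integrable_continuous_interval continuous_intros
          continuous_on_subset[OF continuous_on_Nw] sub)
  next
    fix z assume z: "z \<in> {0..y}"
    have "w * cosh (kr * z) * K \<le> cosh (kr * (1 - y)) * cosh (kr * z) * K"
      using w one_le_K by (intro mult_right_mono) (auto simp: less_imp_le)
    also have "\<dots> = cosh (kr * z) * cosh (kr * (1 - y)) * K" by (simp only: mult.commute)
    also have "\<dots> \<le> 4 * sK * exp (- K * (y - z))"
      using cosh_mult_cosh_le[of z "1 - y"] z y by simp
    finally show "w * g z \<le> (4 * sK * E) * (exp (- K * (y - z)) * Nw z)"
      using mult_right_mono[OF _ mult_nonneg_nonneg[OF norm_ge_zero[THEN zero_le_power] E_nonneg]]
      unfolding g_def by (smt (verit, best) mult.assoc mult.commute)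
  qed
  also have "\<dots> = 4 * sK * E * JL y" by (rule integral_mult_right)
  finally show ?thesis .
qed

lemma P_Q_eq_remainders:
  assumes y: "y \<in> {0..1}"
  shows "P y = - Bb y - integral {y..1} Wb" "Q y = Ba y - integral {0..y} Wa"
  using integral_unique[OF Wb_has_integral[OF y]] integral_unique[OF Wa_has_integral[OF y]]
  by (simp_all add: algebra_simps)

lemma U_eq_remainders:
  assumes y: "y \<in> {0..1}"
  shows "U y = - complex_of_real (1 / sK) * (Sa y * integral {y..1} Wb + Sb y * integral {0..y} Wa)"
proof -
  have "c * (sa * (- (sb * rl) - iwb) + sb * (sa * rl - iwa)) = - c * (sa * iwb + sb * iwa)"
    for c sa sb rl iwa iwb :: complex
    by (simp add: algebra_simps)
  then show ?thesis
    unfolding P_Q_eq_remainders[OF y] mult.assoc[of "Sa y"] mult.assoc[of "Sb y"] .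
qed

text \<open>The boundary terms of the integration by parts add up to \<open>- r * logD\<close>; this is the
  \<open>g * log\<close> part of the \<open>Z\<close>-decomposition of \<open>dU\<close>.\<close>
lemma dU_plus_r_logD_eq_remainders:
  assumes y: "y \<in> {0..1}"
  shows "dU y + r y * logD y
    = complex_of_real (kr / sK) * (Cb y * integral {0..y} Wa - Ca y * integral {y..1} Wb)"
proof -
  have one: "complex_of_real (kr / sK) * (Ca y * Sb y + Cb y * Sa y) = 1"
    unfolding sinh_add_sinh_identity using sK_pos k by (simp flip: of_real_mult)
  have "c * (ca * (- (sb * rl) - iwb) - cb * (sa * rl - iwa)) + rl
      = c * (cb * iwa - ca * iwb) + rl * (1 - c * (ca * sb + cb * sa))"
    for c ca cb sa sb rl iwa iwb :: complex
    by (simp add: algebra_simps)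
  from this[of "complex_of_real (kr / sK)" "Ca y" "Sb y" "r y * logD y" "integral {y..1} Wb"
      "Cb y" "Sa y" "integral {0..y} Wa", unfolded one]
  show ?thesis
    unfolding P_Q_eq_remainders[OF y] mult.assoc[of "Sa y"] mult.assoc[of "Sb y"] by simp
qed

lemma norm_U_le: "y \<in> {0..1} \<Longrightarrow> cmod (U y) \<le> 4 * E * (JR y + JL y)"
proof -
  assume y: "y \<in> {0..1}"
  have "cmod (U y) = (1 / sK) * cmod (Sa y * integral {y..1} Wb + Sb y * integral {0..y} Wa)"
    unfolding U_eq_remainders[OF y] using sK_pos by (simp only: norm_mult norm_minus_cancel norm_of_real) simp
  also have "\<dots> \<le> (1 / sK) * (\<bar>sinh (kr * y)\<bar> * cmod (integral {y..1} Wb)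
      + \<bar>sinh (kr * (1 - y))\<bar> * cmod (integral {0..y} Wa))"
    using sK_pos norm_triangle_ineq[of "Sa y * integral {y..1} Wb" "Sb y * integral {0..y} Wa"]
    by (intro mult_left_mono) (simp_all only: norm_mult norm_of_real, simp)
  also have "\<dots> \<le> (1 / sK) * (4 * sK * E * JR y + 4 * sK * E * JL y)"
    using sK_pos weighted_norm_integral_Wb_le[OF y abs_ge_zero abs_sinh_le_cosh]
      weighted_norm_integral_Wa_le[OF y abs_ge_zero abs_sinh_le_cosh]
    by (intro mult_left_mono add_mono) auto
  also have "\<dots> = 4 * E * (JR y + JL y)"
  proof -
    have "s > 0 \<Longrightarrow> (1 / s) * (4 * s * c * a + 4 * s * c * a') = 4 * c * (a + a')" for s c a a' :: real
      by (simp add: field_simps)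
    then show ?thesis using sK_pos .
  qed
  finally show ?thesis .
qed

lemma norm_dU_plus_r_logD_le: "y \<in> {0..1} \<Longrightarrow> cmod (dU y + r y * logD y) \<le> 4 * E * K * (JR y + JL y)"
proof -
  assume y: "y \<in> {0..1}"
  have "\<bar>kr / sK\<bar> = K / sK" using sK_pos by (simp only: abs_divide abs_of_pos)
  then have "cmod (dU y + r y * logD y) = (K / sK) * cmod (Cb y * integral {0..y} Wa - Ca y * integral {y..1} Wb)"
    unfolding dU_plus_r_logD_eq_remainders[OF y] by (simp only: norm_mult norm_of_real)
  also have "\<dots> \<le> (K / sK) * (cosh (kr * (1 - y)) * cmod (integral {0..y} Wa)
      + cosh (kr * y) * cmod (integral {y..1} Wb))"
    using sK_pos norm_triangle_ineq4[of "Cb y * integral {0..y} Wa" "Ca y * integral {y..1} Wb"]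
    by (intro mult_left_mono) (simp_all only: norm_mult norm_of_real, simp_all add: less_imp_le)
  also have "\<dots> \<le> (K / sK) * (4 * sK * E * JL y + 4 * sK * E * JR y)"
    using sK_pos weighted_norm_integral_Wa_le[OF y _ order_refl] weighted_norm_integral_Wb_le[OF y _ order_refl]
    by (intro mult_left_mono add_mono) (auto simp: less_imp_le)
  also have "\<dots> = 4 * E * K * (JR y + JL y)"
  proof -
    have "s > 0 \<Longrightarrow> (K / s) * (4 * s * c * a' + 4 * s * c * a) = 4 * c * K * (a + a')" for s c a a' :: real
      by (simp add: field_simps)
    then show ?thesis using sK_pos .
  qed
  finally show ?thesis .
qed

section \<open>The decomposition of the derivative\<close>

abbreviation "lgk \<equiv> ln (jbr kr)"

lemma lgk_bounds: "ln K \<le> lgk" "ln 2 / 2 \<le> lgk" "1 + ln K \<le> (1 + 2 / ln 2) * lgk"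
proof -
  have j: "jbr kr = sqrt (1 + kr\<^sup>2)" by (simp add: jbr_def)
  have "K \<le> jbr kr" unfolding j using real_sqrt_le_mono[of "kr\<^sup>2" "1 + kr\<^sup>2"] by simp
  then show lnK: "ln K \<le> lgk" using one_le_K by simp
  have "1 \<le> kr\<^sup>2" using one_le_K by (metis abs_le_square_iff abs_one power_one)
  then have "sqrt 2 \<le> jbr kr" by (simp add: j)
  then have "ln (sqrt 2) \<le> lgk" by (intro ln_mono) auto
  then show half: "ln 2 / 2 \<le> lgk" by (simp add: ln_sqrt)
  have "2 / ln 2 * (ln 2 / 2) \<le> 2 / ln 2 * lgk" using half by (intro mult_left_mono) auto
  then have "1 \<le> 2 / ln 2 * lgk" by simp
  then show "1 + ln K \<le> (1 + 2 / ln 2) * lgk" using lnK unfolding distrib_right mult_1_left by linarith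
qed

lemma lgk_pos: "0 < lgk"
  using lgk_bounds(2) ln_gt_zero[of "2::real"] by linarith

text \<open>This is where \<open>m \<le> 5\<close> is used: it makes the constant independent of \<open>m\<close>.\<close>
lemma K_JR_plus_JL_le: "y \<in> {0..1} \<Longrightarrow> K * (JR y + JL y) \<le> kernel_const \<theta> * lgk ^ (m + 2)"
proof -
  assume y: "y \<in> {0..1}"
  have p: "1 \<le> m + 2" "m + 2 \<le> 7" using m by auto
  have c: "1 \<le> log_const \<theta>" by (rule one_le_log_const[OF \<theta>])
  have e: "0 < \<bar>eps\<bar>" "\<bar>eps\<bar> \<le> 1/2" using eps by auto
  have Nw_le: "Nw z \<le> log_const \<theta> ^ (m + 2) * (1 + \<bar>ln (\<bar>z - y0\<bar> + \<bar>eps\<bar>)\<bar>) ^ (m + 2)"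
    if "z \<in> {0..1}" for z
    using power_mono[OF norm_Lw_le[OF that] norm_ge_zero, of "m + 2"] unfolding power_mult_distrib .
  have "K * (JR y + JL y)
      \<le> log_const \<theta> ^ (m + 2) * (1 + ln K) ^ (m + 2) * (2 ^ (m + 3) + 4 * pi * (2 * real (m + 2)) ^ (m + 2))"
    using exp_kernel_log_power_integral_le[OF one_le_K e _ _ _ _ p(1) _ continuous_on_Nw Nw_le] y y0 c
    by (simp add: eval_nat_numeral)
  also have "\<dots> \<le> log_const \<theta> ^ 7 * ((1 + 2 / ln 2) ^ 7 * lgk ^ (m + 2)) * (2 ^ 8 + 4 * pi * 14 ^ 7)"
  proof (intro mult_mono add_mono)
    show "log_const \<theta> ^ (m + 2) \<le> log_const \<theta> ^ 7" using c p by (intro power_increasing) auto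
    have "(1 + ln K) ^ (m + 2) \<le> ((1 + 2 / ln 2) * lgk) ^ (m + 2)"
      using lgk_bounds(3) one_le_K by (intro power_mono) auto
    also have "\<dots> \<le> (1 + 2 / ln 2) ^ 7 * lgk ^ (m + 2)"
      unfolding power_mult_distrib using p lgk_pos by (intro mult_right_mono power_increasing) auto
    finally show "(1 + ln K) ^ (m + 2) \<le> (1 + 2 / ln 2) ^ 7 * lgk ^ (m + 2)" .
    show "(2::real) ^ (m + 3) \<le> 2 ^ 8" using p by (intro power_increasing) auto
    have "(2 * real (m + 2)) ^ (m + 2) \<le> 14 ^ (m + 2)" using p by (intro power_mono) auto
    also have "(14::real) ^ (m + 2) \<le> 14 ^ 7" using p by (intro power_increasing) auto
    finally show "(2 * real (m + 2)) ^ (m + 2) \<le> 14 ^ 7" .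
  qed (use c one_le_K lgk_pos in \<open>auto intro!: mult_nonneg_nonneg\<close>)
  also have "\<dots> = kernel_const \<theta> * lgk ^ (m + 2)" by (simp add: kernel_const_def mult_ac)
  finally show ?thesis .
qed

abbreviation "u \<equiv> Top b k y0 eps f"
abbreviation "Jk \<equiv> kernel_const \<theta> * lgk ^ (m + 2)"
abbreviation "gu \<equiv> \<lambda>y. - r y"
abbreviation "hu \<equiv> \<lambda>y. dI u y + r y * logD y"

lemma u_has_vector_derivative:
  assumes y: "y \<in> {0..1}"
  shows "(u has_vector_derivative dU y) (at y within {0..1})"
proof (rule has_vector_derivative_transform[OF y _ U_has_vector_derivative[OF y]])
  show "x \<in> {0..1} \<Longrightarrow> u x = U x" for x by (rule Top_eq_U)
qed

lemma dI_u: "y \<in> {0..1} \<Longrightarrow> dI u y = dU y"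
  by (rule dI_eq[OF _ u_has_vector_derivative])

lemma hu_has_vector_derivative:
  assumes y: "y \<in> {0..1}"
  shows "(hu has_vector_derivative complex_of_real (kr ^ 2) * U y + dr y * logD y) (at y within {0..1})"
proof -
  have "((\<lambda>x. dU x + r x * logD x) has_vector_derivative
      (complex_of_real (kr ^ 2) * U y - F y) + (r y * (complex_of_real (b' y) / D y) + dr y * logD y))
      (at y within {0..1})"
    by (intro has_vector_derivative_add has_vector_derivative_mult dU_has_vector_derivative[OF y]
        r_has_vector_derivative[OF y] logD_has_vector_derivative[OF y])
  then have "((\<lambda>x. dU x + r x * logD x) has_vector_derivative
      complex_of_real (kr ^ 2) * U y + dr y * logD y) (at y within {0..1})"
    unfolding r_mult_logD_derivative[OF y] by simp
  then show ?thesis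
  proof (rule has_vector_derivative_transform[OF y, rotated])
    show "x \<in> {0..1} \<Longrightarrow> hu x = dU x + r x * logD x" for x by (simp add: dI_u)
  qed
qed

lemma JR_plus_JL_le: "y \<in> {0..1} \<Longrightarrow> JR y + JL y \<le> Jk / K"
  using K_JR_plus_JL_le[of y] one_le_K by (simp add: le_divide_eq mult.commute)

lemma norm_u_le: "y \<in> {0..1} \<Longrightarrow> cmod (u y) \<le> 4 * E * Jk / K"
proof -
  assume y: "y \<in> {0..1}"
  have "cmod (u y) \<le> 4 * E * (JR y + JL y)" using norm_U_le[OF y] Top_eq_U[OF y] by simp
  also have "\<dots> \<le> 4 * E * (Jk / K)" using JR_plus_JL_le[OF y] E_nonneg by (intro mult_left_mono) auto
  finally show ?thesis by simp
qed

lemma K_norm_U_le: "y \<in> {0..1} \<Longrightarrow> K * cmod (U y) \<le> 4 * E * Jk"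
proof -
  assume y: "y \<in> {0..1}"
  have "K * cmod (U y) \<le> 4 * E * (K * (JR y + JL y))"
    using mult_left_mono[OF norm_U_le[OF y], of K] one_le_K by (simp add: mult_ac)
  also have "\<dots> \<le> 4 * E * Jk" using K_JR_plus_JL_le[OF y] E_nonneg by (intro mult_left_mono) auto
  finally show ?thesis .
qed

lemma norm_hu_le: "y \<in> {0..1} \<Longrightarrow> cmod (hu y) \<le> 4 * E * Jk"
proof -
  assume y: "y \<in> {0..1}"
  have "cmod (hu y) \<le> 4 * E * (K * (JR y + JL y))"
    using norm_dU_plus_r_logD_le[OF y] by (simp add: dI_u[OF y] mult_ac)
  also have "\<dots> \<le> 4 * E * Jk" using K_JR_plus_JL_le[OF y] E_nonneg by (intro mult_left_mono) auto
  finally show ?thesis .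
qed

lemma Ynorm_gu_le: "Ynorm b \<theta> k y0 eps m gu \<le> ereal (quot_const \<theta> B * Yf + quot_const \<theta> B * Yf)"
proof (rule Ynorm_le)
  have dgu: "y \<in> {0..1} \<Longrightarrow> (gu has_vector_derivative - dr y) (at y within {0..1})" for y
    by (rule has_vector_derivative_minus[OF r_has_vector_derivative])
  then show "diffI gu" by (rule diffI_of_has_vector_derivative)
  fix y :: real assume y: "y \<in> {0..1}"
  have "100 / \<theta> * 1 \<le> quot_const \<theta> B"
    unfolding quot_const_def using \<theta> B_nonneg by (intro mult_left_mono) auto
  moreover have "Mf \<le> Yf" using real_supnorm_nonneg by simp
  ultimately have "Mf * (100 / \<theta>) \<le> Yf * quot_const \<theta> B"
    using \<theta> real_supnorm_nonneg by (intro mult_mono) auto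
  then show "cmod (gu y) \<le> quot_const \<theta> B * Yf"
    using norm_r_le[OF y] by (simp add: mult.commute)
  show "cmod (dI gu y) \<le> K * cmod (Lw y) ^ (1 + m) * (quot_const \<theta> B * Yf)"
    unfolding dI_eq[OF y dgu[OF y]] norm_minus_cancel by (rule norm_dr_le_quot_const[OF y])
qed

lemma Ynorm_hu_le:
  "Ynorm b \<theta> k y0 eps (m + 1) hu \<le> ereal (4 * E * Jk + (4 * E * Jk + (1 + 1 / \<theta>) * (quot_const \<theta> B * Yf)))"
proof (rule Ynorm_le)
  show "diffI hu" by (rule diffI_of_has_vector_derivative[OF hu_has_vector_derivative])
  fix y :: real assume y: "y \<in> {0..1}"
  show "cmod (hu y) \<le> 4 * E * Jk" by (rule norm_hu_le[OF y])
  define X where "X = cmod (Lw y) ^ (1 + (m + 1))"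
  have X: "1 \<le> X" unfolding X_def using one_le_norm_Lw[OF y] by (rule one_le_power)
  have "\<bar>kr ^ 2\<bar> = K * K" by (simp add: power2_eq_square abs_mult)
  then have "cmod (complex_of_real (kr ^ 2) * U y) = K * (K * cmod (U y))"
    by (simp only: norm_mult norm_of_real mult.assoc)
  also have "\<dots> \<le> K * (4 * E * Jk)" using K_norm_U_le[OF y] one_le_K by (intro mult_left_mono) auto
  also have "\<dots> \<le> K * X * (4 * E * Jk)"
  proof (rule mult_right_mono)
    show "K \<le> K * X" using mult_left_mono[OF X, of K] one_le_K by simp
    show "0 \<le> 4 * E * Jk" using E_nonneg kernel_const_nonneg[OF \<theta>] lgk_pos by simp
  qed
  finally have U_le: "cmod (complex_of_real (kr ^ 2) * U y) \<le> K * X * (4 * E * Jk)" .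
  have "cmod (dr y * logD y) \<le> (K * cmod (Lw y) ^ (1 + m) * (quot_const \<theta> B * Yf)) * ((1 + 1 / \<theta>) * cmod (Lw y))"
    unfolding norm_mult using quot_const_nonneg real_supnorm_nonneg
    by (intro mult_mono norm_dr_le_quot_const[OF y] norm_logD_le[OF y] mult_nonneg_nonneg add_nonneg_nonneg) auto
  also have "\<dots> = K * X * ((1 + 1 / \<theta>) * (quot_const \<theta> B * Yf))"
    by (simp add: X_def mult_ac)
  finally have dr_le: "cmod (dr y * logD y) \<le> K * X * ((1 + 1 / \<theta>) * (quot_const \<theta> B * Yf))" .
  show "cmod (dI hu y) \<le> K * cmod (Lw y) ^ (1 + (m + 1)) * (4 * E * Jk + (1 + 1 / \<theta>) * (quot_const \<theta> B * Yf))"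
  proof -
    have "cmod (dI hu y) \<le> cmod (complex_of_real (kr ^ 2) * U y) + cmod (dr y * logD y)"
      unfolding dI_eq[OF y hu_has_vector_derivative[OF y]] by (rule norm_triangle_ineq)
    also have "\<dots> \<le> K * X * (4 * E * Jk) + K * X * ((1 + 1 / \<theta>) * (quot_const \<theta> B * Yf))"
      by (rule add_mono[OF U_le dr_le])
    finally show ?thesis by (simp only: X_def distrib_left)
  qed
qed

lemma Znorm_Top_le:
  "Znorm b \<theta> k y0 eps m u \<le> ereal (final_const \<theta> B / K * lgk ^ (m + 2)) * Ynorm b \<theta> k y0 eps m f"
proof -
  let ?S = "{(g, h). \<forall>y\<in>{0..1}. dI u y = g y * Ln (den b y0 eps y) + h y}"
  let ?Y = "\<lambda>gh. Ynorm b \<theta> k y0 eps m (fst gh) + Ynorm b \<theta> k y0 eps (m + 1) (snd gh)"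
  define A where "A = quot_const \<theta> B * Yf + quot_const \<theta> B * Yf"
  define A' where "A' = 4 * E * Jk + (4 * E * Jk + (1 + 1 / \<theta>) * (quot_const \<theta> B * Yf))"
  have "(gu, hu) \<in> ?S" by simp
  then have inf: "(INF gh \<in> ?S. ?Y gh) \<le> ereal A + ereal A'"
    unfolding A_def A'_def by (rule INF_lower2) (simp only: fst_conv snd_conv add_mono[OF Ynorm_gu_le Ynorm_hu_le])
  have "Znorm b \<theta> k y0 eps m u = supnorm u + ereal (1 / K) * (INF gh \<in> ?S. ?Y gh)"
    using diffI_of_has_vector_derivative[OF u_has_vector_derivative] by (simp add: Znorm_def)
  also have "\<dots> \<le> ereal (4 * E * Jk / K) + ereal (1 / K) * (ereal A + ereal A')"
    using one_le_K by (intro add_mono supnorm_le[OF norm_u_le] ereal_mult_left_mono[OF inf]) auto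
  also have "\<dots> = ereal (4 * E * Jk / K + 1 / K * (A + A'))" by simp
  also have "\<dots> \<le> ereal (final_const \<theta> B / K * lgk ^ (m + 2) * Yf)"
  proof -
    have "0 \<le> Yf" using real_supnorm_nonneg by simp
    moreover have "(ln 2 / 2) ^ 7 \<le> lgk ^ (m + 2)"
      using lgk_bounds(2) m ln_le_minus_one[of "2::real"] by (intro power_le_power_of_le_one) auto
    ultimately show ?thesis
      unfolding A_def A'_def ereal_less_eq(3)
      by (rule constants_le_final_const[OF \<theta> B_nonneg one_le_K])
  qed
  finally show ?thesis by (simp add: Ynorm_f_eq)
qed

end

theorem lemma2p1:
  fixes b :: "real \<Rightarrow> real" and \<theta> :: real
  assumes "0 < \<theta>" and "\<theta> < 1/10"
    and "C4_with_bounds b \<theta>"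
  shows "\<exists>C>1. \<forall>(eps::real) (k::int) (y0::real) (m::nat) (f::real \<Rightarrow> complex).
           eps \<in> {-1/4..1/4} \<longrightarrow> eps \<noteq> 0 \<longrightarrow> k \<noteq> 0 \<longrightarrow> y0 \<in> {0..1} \<longrightarrow>
           1 \<le> m \<longrightarrow> m \<le> 5 \<longrightarrow> Ynorm b \<theta> k y0 eps m f < \<infinity> \<longrightarrow>
           Znorm b \<theta> k y0 eps m (Top b k y0 eps f)
             \<le> ereal (C / \<bar>real_of_int k\<bar> * (ln (jbr (real_of_int k))) ^ (m + 2))
               * Ynorm b \<theta> k y0 eps m f"
proof -
  obtain b' b'' B where b:
    "\<And>y. y \<in> {0..1} \<Longrightarrow> (b has_real_derivative b' y) (at y within {0..1})"
    "\<And>y. y \<in> {0..1} \<Longrightarrow> (b' has_real_derivative b'' y) (at y within {0..1})"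
    "\<And>y. y \<in> {0..1} \<Longrightarrow> \<theta> / 100 \<le> \<bar>b' y\<bar> \<and> \<bar>b' y\<bar> \<le> 1 / (100 * \<theta>)"
    "\<And>y. y \<in> {0..1} \<Longrightarrow> \<bar>b'' y\<bar> \<le> B"
    using C4_with_bounds_E[OF assms(3)] by blast
  have "0 \<le> B" using b(4)[of 0] by simp
  show ?thesis
  proof (intro exI[of _ "final_const \<theta> B"] conjI allI impI)
    show "1 < final_const \<theta> B" using one_less_final_const assms(1,2) \<open>0 \<le> B\<close> .
    fix eps k y0 m f
    assume "eps \<in> {-1/4..1/4}" "eps \<noteq> 0" "k \<noteq> 0" "y0 \<in> {0..1}" "1 \<le> m" "m \<le> 5"
      "Ynorm b \<theta> k y0 eps m f < \<infinity>"
    then interpret Top_setting b b' b'' \<theta> B eps k y0 m f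
      using assms b by unfold_locales auto
    show "Znorm b \<theta> k y0 eps m (Top b k y0 eps f)
        \<le> ereal (final_const \<theta> B / \<bar>real_of_int k\<bar> * (ln (jbr (real_of_int k))) ^ (m + 2))
          * Ynorm b \<theta> k y0 eps m f"
      by (rule Znorm_Top_le)
  qed
qed

end
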